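(* Let $\mathbb{S}$ be a commutative semigroup with unit $0$, let $\mathcal{A}\subseteq\mathcal{B}(H)$ be a von Neumann algebra, let $T$ be a CP-semigroup over $\mathbb{S}$ on $\mathcal{A}$, and let $(p,K,\mathcal{B},\theta)$ be a dilation of $T$. Then $(p,K,\mathcal{B},\theta)$ is minimal if and only if (1) $\mathcal{B}$ is the von Neumann algebra generated by $\bigcup_{s\in\mathbb{S}}\theta_s(\mathcal{A})$, and (2) $K=\overline{\mathrm{span}}\{\theta_{s_1}(a_1)\cdots\theta_{s_k}(a_k)h : k\in\mathbb{N},\ h\in H,\ a_i\in\mathcal{A},\ s_i\in\mathbb{S},\ 1\le i\le k\}$.
   Context: A CP-semigroup over $\mathbb{S}$ on $\mathcal{A}$ is a family $T=\{T_s\}_{s\in\mathbb{S}}$ of normal contractive completely positive maps on $\mathcal{A}$ with $T_0=\mathrm{id}_{\mathcal{A}}$ and $T_s\circ T_t=T_{s+t}$. An E-semigroup is a CP-semigroup consisting of $*$-endomorphisms. A dilation of $T$ is a quadruple $(p,K,\mathcal{B},\theta)$ where $K\supseteq H$ is a Hilbert space, $\mathcal{B}\subseteq\mathcal{B}(K)$ is a von Neumann algebra, $p\in\mathcal{B}$ is the orthogonal projection $K\to H$, $\mathcal{A}=p\mathcal{B}p$, and $\theta=\{\theta_s\}_{s\in\mathbb{S}}$ is an E-semigroup on $\mathcal{B}$ with $T_s(a)=p\theta_s(a)p$ for all $a\in\mathcal{A}$, $s\in\mathbb{S}$. The dilation is minimal if the von Neumann algebra generated by $\bigcup_{s}\theta_s(\mathcal{A})$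 is $\mathcal{B}$ and the central carrier of $p$ in $\mathcal{B}$ (the smallest projection $q\in\mathcal{B}\cap\mathcal{B}'$ with $qp=p$) equals $1_{\mathcal{B}}$. *)

theory Defs
  imports "HOL-Analysis.Analysis" "HOL-Library.Function_Algebras"
begin

text \<open>Concrete model of Hilbert spaces: every complex Hilbert space is unitarily
equivalent to a closed subspace of the sequence space l2 over some index type.\<close>

type_synonym 'i vec = "'i \<Rightarrow> complex"
type_synonym 'i op = "'i vec \<Rightarrow> 'i vec"

definition ell2 :: "'i vec set" where
  "ell2 = {x. (\<lambda>i. (cmod (x i))^2) summable_on UNIV}"

definition cinner :: "'i vec \<Rightarrow> 'i vec \<Rightarrow> complex" where
  "cinner x y = infsum (\<lambda>i. cnj (x i) * y i) UNIV"

definition vnorm :: "'i vec \<Rightarrow> real" where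
  "vnorm x = sqrt (infsum (\<lambda>i. (cmod (x i))^2) UNIV)"

definition csmul :: "complex \<Rightarrow> 'i vec \<Rightarrow> 'i vec" where
  "csmul c x = (\<lambda>i. c * x i)"

definition l2closure :: "'i vec set \<Rightarrow> 'i vec set" where
  "l2closure X = {x \<in> ell2. \<forall>e>0. \<exists>y\<in>X. vnorm (x - y) < e}"

definition lin_span :: "'i vec set \<Rightarrow> 'i vec set" where
  "lin_span X = {x. \<exists>(n::nat) c v. (\<forall>k<n. v k \<in> X) \<and> x = (\<Sum>k<n. csmul (c k) (v k))}"

definition closed_subspace :: "'i vec set \<Rightarrow> bool" where
  "closed_subspace S \<longleftrightarrow> S \<subseteq> ell2 \<and> 0 \<in> S \<and> (\<forall>x\<in>S. \<forall>y\<in>S. x + y \<in> S)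
     \<and> (\<forall>c. \<forall>x\<in>S. csmul c x \<in> S) \<and> l2closure S \<subseteq> S"

definition bop :: "'i vec set \<Rightarrow> 'i op \<Rightarrow> bool" where
  "bop S a \<longleftrightarrow> (\<forall>x\<in>S. a x \<in> S) \<and> (\<forall>x\<in>S. \<forall>y\<in>S. a (x + y) = a x + a y)
     \<and> (\<forall>c. \<forall>x\<in>S. a (csmul c x) = csmul c (a x))
     \<and> (\<exists>C. \<forall>x\<in>S. vnorm (a x) \<le> C * vnorm x) \<and> (\<forall>x. x \<notin> S \<longrightarrow> a x = 0)"

definition idop :: "'i vec set \<Rightarrow> 'i op" where
  "idop S x = (if x \<in> S then x else 0)"

definition opnorm :: "'i vec set \<Rightarrow> 'i op \<Rightarrow> real" where
  "opnorm S a = Sup {vnorm (a x) | x. x \<in> S \<and> vnorm x \<le> 1}"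

definition opsmul :: "complex \<Rightarrow> 'i op \<Rightarrow> 'i op" where
  "opsmul c a = (\<lambda>x. csmul c (a x))"

definition is_adj :: "'i vec set \<Rightarrow> 'i op \<Rightarrow> 'i op \<Rightarrow> bool" where
  "is_adj S a b \<longleftrightarrow> bop S a \<and> bop S b \<and> (\<forall>x\<in>S. \<forall>y\<in>S. cinner (a x) y = cinner x (b y))"

definition op_commutant :: "'i vec set \<Rightarrow> 'i op set \<Rightarrow> 'i op set" where
  "op_commutant S M = {b. bop S b \<and> (\<forall>a\<in>M. b \<circ> a = a \<circ> b)}"

definition vN_algebra :: "'i vec set \<Rightarrow> 'i op set \<Rightarrow> bool" where
  "vN_algebra S M \<longleftrightarrow> (\<forall>a\<in>M. bop S a) \<and> (\<forall>a\<in>M. \<exists>b\<in>M. is_adj S a b)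
     \<and> op_commutant S (op_commutant S M) = M"

definition gen_vN :: "'i vec set \<Rightarrow> 'i op set \<Rightarrow> 'i op set" where
  "gen_vN S X = \<Inter>{M. vN_algebra S M \<and> X \<subseteq> M}"

definition is_projection :: "'i vec set \<Rightarrow> 'i op \<Rightarrow> bool" where
  "is_projection S q \<longleftrightarrow> bop S q \<and> q \<circ> q = q \<and> is_adj S q q"

definition central_carrier :: "'i vec set \<Rightarrow> 'i op set \<Rightarrow> 'i op \<Rightarrow> 'i op \<Rightarrow> bool" where
  "central_carrier S B p q \<longleftrightarrow>
     q \<in> B \<inter> op_commutant S B \<and> is_projection S q \<and> q \<circ> p = p \<and>
     (\<forall>q'. q' \<in> B \<inter> op_commutant S B \<and> is_projection S q' \<and> q' \<circ> p = p \<longrightarrow> q' \<circ> q = q)"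

definition pos_matrix :: "'i vec set \<Rightarrow> nat \<Rightarrow> (nat \<Rightarrow> nat \<Rightarrow> 'i op) \<Rightarrow> bool" where
  "pos_matrix S n a \<longleftrightarrow> (\<forall>h. (\<forall>i<n. h i \<in> S) \<longrightarrow>
     (let z = (\<Sum>i<n. \<Sum>j<n. cinner (h i) (a i j (h j))) in Im z = 0 \<and> Re z \<ge> 0))"

definition completely_positive :: "'i vec set \<Rightarrow> 'i op set \<Rightarrow> ('i op \<Rightarrow> 'i op) \<Rightarrow> bool" where
  "completely_positive S A T \<longleftrightarrow> (\<forall>n a. (\<forall>i<n. \<forall>j<n. a i j \<in> A) \<longrightarrow> pos_matrix S n a
      \<longrightarrow> pos_matrix S n (\<lambda>i j. T (a i j)))"

definition sw_functional :: "'i vec set \<Rightarrow> ('i op \<Rightarrow> complex) \<Rightarrow> bool" where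
  "sw_functional S \<omega> \<longleftrightarrow> (\<exists>\<xi> \<eta>. (\<forall>n. \<xi> n \<in> S \<and> \<eta> n \<in> S)
      \<and> summable (\<lambda>n. (vnorm (\<xi> n))^2) \<and> summable (\<lambda>n. (vnorm (\<eta> n))^2)
      \<and> (\<forall>a. \<omega> a = (\<Sum>n. cinner (\<xi> n) (a (\<eta> n)))))"

text \<open>Normal = continuous for the sigma-weak topology (on A), phrased via filter convergence.\<close>
definition normal_map :: "'i vec set \<Rightarrow> 'i op set \<Rightarrow> ('i op \<Rightarrow> 'i op) \<Rightarrow> bool" where
  "normal_map S A T \<longleftrightarrow> (\<forall>a\<in>A. \<forall>F. F \<le> principal A \<longrightarrow>
      (\<forall>\<omega>. sw_functional S \<omega> \<longrightarrow> (\<omega> \<longlongrightarrow> \<omega> a) F) \<longrightarrow>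
      (\<forall>\<omega>. sw_functional S \<omega> \<longrightarrow> ((\<lambda>x. \<omega> (T x)) \<longlongrightarrow> \<omega> (T a)) F))"

definition ncp_map :: "'i vec set \<Rightarrow> 'i op set \<Rightarrow> ('i op \<Rightarrow> 'i op) \<Rightarrow> bool" where
  "ncp_map S A T \<longleftrightarrow> (\<forall>a\<in>A. T a \<in> A)
     \<and> (\<forall>a\<in>A. \<forall>b\<in>A. T (a + b) = T a + T b)
     \<and> (\<forall>c. \<forall>a\<in>A. T (opsmul c a) = opsmul c (T a))
     \<and> (\<forall>a\<in>A. opnorm S (T a) \<le> opnorm S a)
     \<and> completely_positive S A T \<and> normal_map S A T"

definition cp_semigroup :: "'i vec set \<Rightarrow> 'i op set \<Rightarrow> ('s::comm_monoid_add \<Rightarrow> 'i op \<Rightarrow> 'i op) \<Rightarrow> bool" where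
  "cp_semigroup S A T \<longleftrightarrow> (\<forall>s. ncp_map S A (T s)) \<and> (\<forall>a\<in>A. T 0 a = a)
     \<and> (\<forall>s t. \<forall>a\<in>A. T s (T t a) = T (s + t) a)"

definition e_semigroup :: "'i vec set \<Rightarrow> 'i op set \<Rightarrow> ('s::comm_monoid_add \<Rightarrow> 'i op \<Rightarrow> 'i op) \<Rightarrow> bool" where
  "e_semigroup S B \<theta> \<longleftrightarrow> cp_semigroup S B \<theta> \<and>
     (\<forall>s. (\<forall>a\<in>B. \<forall>b\<in>B. \<theta> s (a \<circ> b) = \<theta> s a \<circ> \<theta> s b) \<and>
          (\<forall>a\<in>B. \<forall>b. is_adj S a b \<longrightarrow> is_adj S (\<theta> s a) (\<theta> s b)))"

text \<open>Identification of operators on H with the corner p B(K) p: an operator a on H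
(vanishing off H) corresponds to a \<circ> p on K; an operator b on K compresses to
p b p restricted to H.\<close>
definition restr_op :: "'i vec set \<Rightarrow> 'i op \<Rightarrow> 'i op" where
  "restr_op H f x = (if x \<in> H then f x else 0)"

definition compr :: "'i vec set \<Rightarrow> 'i op \<Rightarrow> 'i op \<Rightarrow> 'i op" where
  "compr H p b = restr_op H (p \<circ> b \<circ> p)"

definition ext_op :: "'i op \<Rightarrow> 'i op \<Rightarrow> 'i op" where
  "ext_op p a = a \<circ> p"

definition dilation ::
  "'i vec set \<Rightarrow> 'i op set \<Rightarrow> ('s::comm_monoid_add \<Rightarrow> 'i op \<Rightarrow> 'i op)
   \<Rightarrow> 'i op \<Rightarrow> 'i vec set \<Rightarrow> 'i op set \<Rightarrow> ('s \<Rightarrow> 'i op \<Rightarrow> 'i op) \<Rightarrow> bool" where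
  "dilation H A T p K B \<theta> \<longleftrightarrow> closed_subspace K \<and> H \<subseteq> K \<and> vN_algebra K B \<and>
     p \<in> B \<and> is_projection K p \<and> p ` K = H \<and>
     A = compr H p ` B \<and> e_semigroup K B \<theta> \<and>
     (\<forall>s. \<forall>a\<in>A. T s a = compr H p (\<theta> s (ext_op p a)))"

definition minimal_dilation ::
  "'i vec set \<Rightarrow> 'i op set \<Rightarrow> 'i op \<Rightarrow> 'i vec set \<Rightarrow> 'i op set \<Rightarrow> ('s \<Rightarrow> 'i op \<Rightarrow> 'i op) \<Rightarrow> bool" where
  "minimal_dilation H A p K B \<theta> \<longleftrightarrow>
     B = gen_vN K (\<Union>s. \<theta> s ` ext_op p ` A) \<and> central_carrier K B p (idop K)"

definition prodops :: "'i op list \<Rightarrow> 'i op" where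
  "prodops xs = foldr (\<circ>) xs id"

end

theory Submission
  imports Defs
begin

text \<open>Let K0 be the closed span of the vectors \<open>\<theta>\<^sub>s\<^sub>1(a\<^sub>1)\<cdots>\<theta>\<^sub>s\<^sub>k(a\<^sub>k)h\<close> and q the
orthogonal projection onto K0. Each generator \<open>\<theta>\<^sub>s(a)\<close> leaves the spanning set invariant, and so
does its adjoint \<open>\<theta>\<^sub>s(a\<^sup>*)\<close>, hence q commutes with the generators. An operator of \<open>B'\<close>
commutes with p and with the products \<open>\<theta>\<^sub>s\<^sub>1(a\<^sub>1)\<cdots>\<theta>\<^sub>s\<^sub>k(a\<^sub>k)\<close>, so it preserves the spanning
set, and it preserves its orthogonal complement because these products times p lie in B.
Thus q lies in \<open>B'' = B\<close> and commutes with the algebra generated by the generators, i.e. q is a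
central projection dominating p, and minimality forces q = 1, that is K0 = K. Conversely, a
central projection dominating p fixes H and commutes with the products, hence fixes K0; if
K0 = K it is the identity.\<close>

section \<open>The sequence space l2\<close>

lemma cmod_add_power2_le: "(cmod (a + b))^2 \<le> 2 * (cmod a)^2 + 2 * (cmod b)^2"
proof -
  have "(cmod (a + b))^2 \<le> (cmod a + cmod b)^2"
    by (simp add: power_mono norm_triangle_ineq)
  also have "\<dots> \<le> 2 * (cmod a)^2 + 2 * (cmod b)^2"
    using sum_squares_bound[of "cmod a" "cmod b"] by (simp add: power2_sum)
  finally show ?thesis .
qed

lemma mem_ell2: "x \<in> ell2 \<longleftrightarrow> (\<lambda>i. (cmod (x i))^2) summable_on UNIV"
  by (simp add: ell2_def)

lemma ell2_zero [simp]: "0 \<in> ell2"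
  by (simp add: mem_ell2)

lemma ell2_add: "x \<in> ell2 \<Longrightarrow> y \<in> ell2 \<Longrightarrow> x + y \<in> ell2"
  unfolding mem_ell2
  by (rule summable_on_comparison_test[where f = "\<lambda>i. 2 * (cmod (x i))^2 + 2 * (cmod (y i))^2"])
     (auto intro!: summable_on_add summable_on_cmult_right simp: cmod_add_power2_le)

lemma ell2_csmul: "x \<in> ell2 \<Longrightarrow> csmul c x \<in> ell2"
  unfolding mem_ell2 csmul_def
  by (auto simp: norm_mult power_mult_distrib intro!: summable_on_cmult_right)

lemma ell2_uminus: "x \<in> ell2 \<Longrightarrow> - x \<in> ell2"
  by (simp add: mem_ell2)

lemma ell2_diff: "x \<in> ell2 \<Longrightarrow> y \<in> ell2 \<Longrightarrow> x - y \<in> ell2"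
  using ell2_add[of x "- y"] ell2_uminus[of y] by simp

lemma summable_on_cinner:
  assumes "x \<in> ell2" "y \<in> ell2"
  shows "(\<lambda>i. cnj (x i) * y i) summable_on UNIV"
proof -
  have bound: "norm (cnj (x i) * y i) \<le> (cmod (x i))^2 + (cmod (y i))^2" for i
  proof -
    have "norm (cnj (x i) * y i) = cmod (x i) * cmod (y i)"
      by (simp add: norm_mult)
    moreover have "0 \<le> cmod (x i) * cmod (y i)"
      by simp
    ultimately show ?thesis
      using sum_squares_bound[of "cmod (x i)" "cmod (y i)"] by linarith
  qed
  have "(\<lambda>i. (cmod (x i))^2 + (cmod (y i))^2) summable_on UNIV"
    using assms by (auto simp: mem_ell2 intro!: summable_on_add)
  then have "(\<lambda>i. norm (cnj (x i) * y i)) summable_on UNIV"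
    by (rule summable_on_comparison_test) (use bound in auto)
  then show ?thesis
    using summable_on_iff_abs_summable_on_complex by blast
qed

lemma cinner_add_left:
  "x \<in> ell2 \<Longrightarrow> y \<in> ell2 \<Longrightarrow> z \<in> ell2 \<Longrightarrow> cinner (x + y) z = cinner x z + cinner y z"
  unfolding cinner_def by (simp add: distrib_right infsum_add summable_on_cinner)

lemma cinner_add_right:
  "x \<in> ell2 \<Longrightarrow> y \<in> ell2 \<Longrightarrow> z \<in> ell2 \<Longrightarrow> cinner z (x + y) = cinner z x + cinner z y"
  unfolding cinner_def by (simp add: distrib_left infsum_add summable_on_cinner)

lemma cinner_csmul_left: "cinner (csmul c x) y = cnj c * cinner x y"
  unfolding cinner_def csmul_def by (simp add: mult.assoc infsum_cmult_right'[symmetric])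

lemma cinner_csmul_right: "cinner y (csmul c x) = c * cinner y x"
  unfolding cinner_def csmul_def by (simp add: mult.left_commute infsum_cmult_right'[symmetric])

lemma cinner_commute: "cinner y x = cnj (cinner x y)"
  unfolding cinner_def by (simp add: infsum_cnj[symmetric] mult.commute del: infsum_cnj)

lemma cinner_zero_left [simp]: "cinner 0 y = 0"
  by (simp add: cinner_def)

lemma cinner_zero_right [simp]: "cinner y 0 = 0"
  by (simp add: cinner_def)

lemma csmul_minus_one: "csmul (-1) x = - x"
  by (auto simp: csmul_def)

lemma cinner_minus_left: "cinner (- x) y = - cinner x y"
  using cinner_csmul_left[of "-1" x y] by (simp add: csmul_minus_one)

lemma cinner_minus_right: "cinner y (- x) = - cinner y x"
  using cinner_csmul_right[of y "-1" x] by (simp add: csmul_minus_one)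

lemma cinner_diff_left:
  "x \<in> ell2 \<Longrightarrow> y \<in> ell2 \<Longrightarrow> z \<in> ell2 \<Longrightarrow> cinner (x - y) z = cinner x z - cinner y z"
  using cinner_add_left[of x "- y" z] ell2_uminus[of y] by (simp add: cinner_minus_left)

lemma cinner_diff_right:
  "x \<in> ell2 \<Longrightarrow> y \<in> ell2 \<Longrightarrow> z \<in> ell2 \<Longrightarrow> cinner z (x - y) = cinner z x - cinner z y"
  using cinner_add_right[of x "- y" z] ell2_uminus[of y] by (simp add: cinner_minus_right)

lemma vnorm_nonneg [simp]: "vnorm x \<ge> 0"
  by (simp add: vnorm_def infsum_nonneg)

lemma vnorm_zero [simp]: "vnorm 0 = 0"
  by (simp add: vnorm_def)

lemma vnorm_minus [simp]: "vnorm (- x) = vnorm x"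
  by (simp add: vnorm_def)

lemma vnorm_minus_commute: "vnorm (x - y) = vnorm (y - x)"
  by (metis minus_diff_eq vnorm_minus)

lemma vnorm_power2: "(vnorm x)^2 = infsum (\<lambda>i. (cmod (x i))^2) UNIV"
  by (simp add: vnorm_def infsum_nonneg)

lemma cinner_self:
  assumes "x \<in> ell2"
  shows "cinner x x = complex_of_real ((vnorm x)^2)"
proof -
  have "((\<lambda>i. complex_of_real ((cmod (x i))^2)) has_sum complex_of_real ((vnorm x)^2)) UNIV"
    using assms by (intro has_sum_of_real) (simp add: mem_ell2 vnorm_power2)
  moreover have "cnj (x i) * x i = complex_of_real ((cmod (x i))^2)" for i
    by (metis complex_norm_square mult.commute)
  ultimately show ?thesis
    unfolding cinner_def by (simp add: infsumI)
qed

lemma vnorm_eq_zero: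
  assumes "x \<in> ell2" "vnorm x = 0"
  shows "x = 0"
proof
  fix i
  have "infsum (\<lambda>i. (cmod (x i))^2) UNIV \<le> 0"
    using assms(2) vnorm_power2[of x] by simp
  then have "(cmod (x i))^2 = 0"
    by (rule nonneg_infsum_le_0D) (use assms(1) in \<open>auto simp: mem_ell2\<close>)
  then show "x i = 0 i" by simp
qed

lemma vnorm_csmul: "vnorm (csmul c x) = cmod c * vnorm x"
proof -
  have "(vnorm (csmul c x))^2 = infsum (\<lambda>i. (cmod c)^2 * (cmod (x i))^2) UNIV"
    by (simp add: vnorm_power2 csmul_def norm_mult power_mult_distrib)
  also have "\<dots> = (cmod c * vnorm x)^2"
    by (simp add: vnorm_power2 infsum_cmult_right' power_mult_distrib)
  finally show ?thesis
    by (simp add: power2_eq_iff_nonneg)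
qed

lemma vnorm_add_power2:
  assumes "x \<in> ell2" "y \<in> ell2"
  shows "(vnorm (x + y))^2 = (vnorm x)^2 + 2 * Re (cinner x y) + (vnorm y)^2"
proof -
  have "cinner (x + y) (x + y) = cinner x x + cinner x y + (cinner y x + cinner y y)"
    using assms ell2_add[OF assms] by (simp add: cinner_add_left cinner_add_right)
  then have "Re (cinner (x + y) (x + y)) = (vnorm x)^2 + Re (cinner x y) + Re (cinner y x) + (vnorm y)^2"
    using assms by (simp add: cinner_self)
  moreover have "Re (cinner y x) = Re (cinner x y)"
    by (simp add: cinner_commute[of y x])
  ultimately show ?thesis
    using ell2_add[OF assms] by (simp add: cinner_self)
qed

lemma cauchy_schwarz:
  assumes "x \<in> ell2" "y \<in> ell2"
  shows "cmod (cinner x y) \<le> vnorm x * vnorm y"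
proof (cases "vnorm y = 0")
  case True
  then have "y = 0"
    using vnorm_eq_zero assms by blast
  then show ?thesis by simp
next
  case False
  define n c where "n = (vnorm y)^2" and "c = cinner y x"
  define t where "t = c / complex_of_real n"
  have "n > 0"
    using False by (simp add: n_def)
  have cxy: "cinner x y = cnj c"
    by (simp add: c_def cinner_commute[of x y])
  have "0 \<le> (vnorm (x + csmul (-t) y))^2"
    by simp
  also have "\<dots> = (vnorm x)^2 + 2 * Re (cinner x (csmul (-t) y)) + (vnorm (csmul (-t) y))^2"
    using vnorm_add_power2[OF assms(1) ell2_csmul[OF assms(2)]] .
  also have "cinner x (csmul (-t) y) = - (t * cnj c)"
    by (simp add: cinner_csmul_right cxy)
  also have "t * cnj c = complex_of_real ((cmod c)^2 / n)"
    unfolding t_def using complex_norm_square[of c] by (simp add: of_real_divide)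
  also have "(vnorm (csmul (-t) y))^2 = (cmod c)^2 / n"
  proof -
    have "(vnorm (csmul (-t) y))^2 = (cmod t)^2 * n"
      by (simp add: vnorm_csmul power_mult_distrib n_def)
    also have "(cmod t)^2 = (cmod c)^2 / n^2"
      using \<open>n > 0\<close> by (simp add: t_def norm_divide power_divide)
    finally show ?thesis
      using \<open>n > 0\<close> by (simp add: power2_eq_square)
  qed
  finally have "0 \<le> (vnorm x)^2 - (cmod c)^2 / n"
    by simp
  then have "(cmod c)^2 \<le> (vnorm x * vnorm y)^2"
    using \<open>n > 0\<close> by (simp add: field_simps n_def power_mult_distrib)
  then have "cmod c \<le> vnorm x * vnorm y"
    by (rule power2_le_imp_le) simp
  then show ?thesis
    by (simp add: cxy)
qed

lemma vnorm_triangle: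
  assumes "x \<in> ell2" "y \<in> ell2"
  shows "vnorm (x + y) \<le> vnorm x + vnorm y"
proof -
  have "Re (cinner x y) \<le> vnorm x * vnorm y"
    using cauchy_schwarz[OF assms] complex_Re_le_cmod order_trans by blast
  then have "(vnorm (x + y))^2 \<le> (vnorm x + vnorm y)^2"
    using vnorm_add_power2[OF assms] by (simp add: power2_sum)
  then show ?thesis
    by (rule power2_le_imp_le) simp
qed

lemma vnorm_triangle_diff:
  assumes "x \<in> ell2" "y \<in> ell2" "z \<in> ell2"
  shows "vnorm (x - z) \<le> vnorm (x - y) + vnorm (y - z)"
proof -
  have "x - z = (x - y) + (y - z)" by simp
  then show ?thesis using vnorm_triangle[of "x - y" "y - z"] assms ell2_diff by metis
qed

lemma cinner_diff_eq_imp_eq: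
  assumes "u \<in> ell2" "w \<in> ell2" "cinner (u - w) u = cinner (u - w) w"
  shows "u = w"
proof -
  have d: "u - w \<in> ell2" using assms ell2_diff by blast
  have "cinner (u - w) (u - w) = 0" using assms d by (simp add: cinner_diff_right)
  then have "vnorm (u - w) = 0" using cinner_self[OF d] by simp
  then show ?thesis using vnorm_eq_zero[OF d] by simp
qed

lemma parallelogram:
  assumes "a \<in> ell2" "b \<in> ell2"
  shows "(vnorm (a - b))^2 = 2 * (vnorm a)^2 + 2 * (vnorm b)^2 - (vnorm (a + b))^2"
proof -
  have "(vnorm (a - b))^2 = (vnorm a)^2 + 2 * Re (cinner a (- b)) + (vnorm (- b))^2"
    using vnorm_add_power2[OF assms(1) ell2_uminus[OF assms(2)]] by simp
  then show ?thesis using vnorm_add_power2[OF assms] by (simp add: cinner_minus_right)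
qed

lemma ell2_vnorm_le_of_finite_sums:
  assumes sums: "\<And>F. finite F \<Longrightarrow> (\<Sum>i\<in>F. (cmod (x i))^2) \<le> c^2" and "c \<ge> 0"
  shows "x \<in> ell2 \<and> vnorm x \<le> c"
proof -
  have summable: "(\<lambda>i. (cmod (x i))^2) summable_on UNIV"
    by (rule nonneg_bdd_above_summable_on) (use sums in \<open>auto intro!: bdd_aboveI2[where M = "c^2"]\<close>)
  then have "infsum (\<lambda>i. (cmod (x i))^2) UNIV \<le> c^2"
    by (rule infsum_le_finite_sums) (use sums in auto)
  then have "(vnorm x)^2 \<le> c^2"
    by (simp add: vnorm_power2)
  then have "vnorm x \<le> c"
    using \<open>c \<ge> 0\<close> by (rule power2_le_imp_le)
  then show ?thesis
    using summable by (simp add: mem_ell2)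
qed

lemma finite_sum_le_vnorm_power2:
  "x \<in> ell2 \<Longrightarrow> finite F \<Longrightarrow> (\<Sum>i\<in>F. (cmod (x i))^2) \<le> (vnorm x)^2"
  unfolding vnorm_power2 by (rule finite_sum_le_infsum) (auto simp: mem_ell2)

lemma Cauchy_component:
  assumes X: "\<And>n. X n \<in> ell2"
    and cauchy: "\<And>e. e > 0 \<Longrightarrow> \<exists>N. \<forall>m\<ge>N. \<forall>n\<ge>N. vnorm (X m - X n) < e"
  shows "Cauchy (\<lambda>n. X n i)"
proof (rule CauchyI)
  fix e :: real assume "e > 0"
  then obtain N where N: "\<forall>m\<ge>N. \<forall>n\<ge>N. vnorm (X m - X n) < e"
    using cauchy by blast
  show "\<exists>M. \<forall>m\<ge>M. \<forall>n\<ge>M. norm (X m i - X n i) < e"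
  proof (intro exI allI impI)
    fix m n assume "N \<le> m" "N \<le> n"
    have "(cmod (X m i - X n i))^2 \<le> (vnorm (X m - X n))^2"
      using finite_sum_le_vnorm_power2[OF ell2_diff[OF X X], of "{i}"] by simp
    then have "cmod (X m i - X n i) \<le> vnorm (X m - X n)"
      by (rule power2_le_imp_le) simp
    also have "\<dots> < e"
      using N \<open>N \<le> m\<close> \<open>N \<le> n\<close> by blast
    finally show "norm (X m i - X n i) < e" .
  qed
qed

text \<open>Fatou's lemma for the l2 norm under componentwise convergence.\<close>

lemma vnorm_diff_le_componentwise_limit:
  fixes X :: "nat \<Rightarrow> 'i vec"
  assumes X: "\<And>m. X m \<in> ell2" and "y \<in> ell2" and lim: "\<And>i. (\<lambda>m. X m i) \<longlonglongrightarrow> x i"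
    and bound: "\<forall>m\<ge>N. vnorm (y - X m) \<le> c" and "c \<ge> 0"
  shows "y - x \<in> ell2 \<and> vnorm (y - x) \<le> c"
proof (rule ell2_vnorm_le_of_finite_sums[OF _ \<open>c \<ge> 0\<close>])
  fix F :: "'i set" assume "finite F"
  have "(\<lambda>m. \<Sum>i\<in>F. (cmod (y i - X m i))^2) \<longlonglongrightarrow> (\<Sum>i\<in>F. (cmod (y i - x i))^2)"
    by (intro tendsto_sum tendsto_power tendsto_norm tendsto_diff tendsto_const lim)
  moreover have "\<forall>m\<ge>N. (\<Sum>i\<in>F. (cmod (y i - X m i))^2) \<le> c^2"
  proof (intro allI impI)
    fix m assume "m \<ge> N"
    have "(\<Sum>i\<in>F. (cmod ((y - X m) i))^2) \<le> (vnorm (y - X m))^2"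
      using finite_sum_le_vnorm_power2[OF ell2_diff[OF \<open>y \<in> ell2\<close> X] \<open>finite F\<close>] .
    also have "\<dots> \<le> c^2"
      using bound \<open>m \<ge> N\<close> by (intro power_mono) auto
    finally show "(\<Sum>i\<in>F. (cmod (y i - X m i))^2) \<le> c^2" by simp
  qed
  ultimately have "(\<Sum>i\<in>F. (cmod (y i - x i))^2) \<le> c^2"
    using LIMSEQ_le_const2 by blast
  then show "(\<Sum>i\<in>F. (cmod ((y - x) i))^2) \<le> c^2" by simp
qed

lemma ell2_complete:
  fixes X :: "nat \<Rightarrow> 'i vec"
  assumes X: "\<And>n. X n \<in> ell2"
    and cauchy: "\<And>e. e > 0 \<Longrightarrow> \<exists>N. \<forall>m\<ge>N. \<forall>n\<ge>N. vnorm (X m - X n) < e"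
  shows "\<exists>x\<in>ell2. \<forall>e>0. \<exists>N. \<forall>n\<ge>N. vnorm (X n - x) < e"
proof -
  define x where "x i = lim (\<lambda>n. X n i)" for i
  have lim: "(\<lambda>n. X n i) \<longlonglongrightarrow> x i" for i
    unfolding x_def using Cauchy_convergent[OF Cauchy_component[OF X cauchy]] convergent_LIMSEQ_iff
    by blast
  have close: "\<exists>N. \<forall>n\<ge>N. X n - x \<in> ell2 \<and> vnorm (X n - x) < e" if "e > 0" for e
  proof -
    obtain N where N: "\<forall>n\<ge>N. \<forall>m\<ge>N. vnorm (X n - X m) < e/2"
      using cauchy[of "e/2"] \<open>e > 0\<close> by auto
    have "X n - x \<in> ell2 \<and> vnorm (X n - x) \<le> e/2" if "n \<ge> N" for n
      using N that \<open>e > 0\<close>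
      by (intro vnorm_diff_le_componentwise_limit[OF X X lim, of N]) (auto intro: less_imp_le)
    then have "\<forall>n\<ge>N. X n - x \<in> ell2 \<and> vnorm (X n - x) < e"
      using \<open>e > 0\<close> by fastforce
    then show ?thesis by blast
  qed
  obtain N where "X N - x \<in> ell2"
    using close[of 1] by auto
  then have "X N - (X N - x) \<in> ell2"
    using ell2_diff[OF X] by blast
  then have "x \<in> ell2"
    by simp
  then show ?thesis
    using close by blast
qed

section \<open>Closed subspaces and the projection theorem\<close>

lemma closed_subspace_ell2: "closed_subspace S \<Longrightarrow> S \<subseteq> ell2"
  by (simp add: closed_subspace_def)

lemma closed_subspace_mem_ell2: "closed_subspace S \<Longrightarrow> x \<in> S \<Longrightarrow> x \<in> ell2"
  by (auto simp: closed_subspace_def)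

lemma closed_subspace_zero: "closed_subspace S \<Longrightarrow> 0 \<in> S"
  by (simp add: closed_subspace_def)

lemma closed_subspace_add: "closed_subspace S \<Longrightarrow> x \<in> S \<Longrightarrow> y \<in> S \<Longrightarrow> x + y \<in> S"
  by (simp add: closed_subspace_def)

lemma closed_subspace_csmul: "closed_subspace S \<Longrightarrow> x \<in> S \<Longrightarrow> csmul c x \<in> S"
  by (simp add: closed_subspace_def)

lemma closed_subspace_closure: "closed_subspace S \<Longrightarrow> l2closure S \<subseteq> S"
  by (simp add: closed_subspace_def)

lemma closed_subspace_uminus: "closed_subspace S \<Longrightarrow> x \<in> S \<Longrightarrow> - x \<in> S"
  using closed_subspace_csmul[of S x "-1"] by (simp add: csmul_minus_one)

lemma closed_subspace_diff: "closed_subspace S \<Longrightarrow> x \<in> S \<Longrightarrow> y \<in> S \<Longrightarrow> x - y \<in> S"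
  using closed_subspace_add[of S x "- y"] closed_subspace_uminus[of S y] by simp

lemma closed_subspace_UNIV_ell2: "closed_subspace ell2"
  unfolding closed_subspace_def l2closure_def using ell2_add ell2_csmul by auto

text \<open>Parallelogram law, applied to x - u and x - w, using that the midpoint of u and w lies in M.\<close>

lemma approximate_minimizers_close:
  assumes M: "closed_subspace M" and x: "x \<in> ell2"
    and low: "\<forall>y\<in>M. \<delta> \<le> vnorm (x - y)" and "\<delta> \<ge> 0"
    and u: "u \<in> M" "vnorm (x - u) \<le> \<delta> + a" and w: "w \<in> M" "vnorm (x - w) \<le> \<delta> + b"
    and ab: "0 \<le> a" "a \<le> 1" "0 \<le> b" "b \<le> 1"
  shows "(vnorm (u - w))^2 \<le> (4 * \<delta> + 2) * (a + b)"
proof -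
  have xu: "x - u \<in> ell2" and xw: "x - w \<in> ell2"
    using x u w ell2_diff closed_subspace_mem_ell2[OF M] by auto
  have "csmul (1/2) (u + w) \<in> M"
    using M u w by (simp add: closed_subspace_add closed_subspace_csmul)
  moreover have "(x - u) + (x - w) = csmul 2 (x - csmul (1/2) (u + w))"
    by (auto simp: csmul_def field_simps)
  ultimately have "2 * \<delta> \<le> vnorm ((x - u) + (x - w))"
    using low by (simp add: vnorm_csmul)
  then have "(2 * \<delta>)^2 \<le> (vnorm ((x - u) + (x - w)))^2"
    using \<open>\<delta> \<ge> 0\<close> by (intro power_mono) auto
  moreover have "(vnorm (x - u))^2 \<le> (\<delta> + a)^2" "(vnorm (x - w))^2 \<le> (\<delta> + b)^2"
    using u w by (auto intro: power_mono)
  moreover have "(x - w) - (x - u) = u - w"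
    by simp
  ultimately have "(vnorm (u - w))^2 \<le> 2 * (\<delta> + a)^2 + 2 * (\<delta> + b)^2 - (2 * \<delta>)^2"
    using parallelogram[OF xw xu] by (simp add: vnorm_minus_commute[of u w] add.commute)
  also have "\<dots> = 4 * \<delta> * (a + b) + 2 * (a * a) + 2 * (b * b)"
    by (simp add: power2_eq_square algebra_simps)
  also have "\<dots> \<le> (4 * \<delta> + 2) * (a + b)"
    using ab mult_left_le_one_le[of a a] mult_left_le_one_le[of b b] by (simp add: algebra_simps)
  finally show ?thesis .
qed

lemma minimizing_sequence_Cauchy:
  assumes M: "closed_subspace M" and x: "x \<in> ell2"
    and low: "\<forall>y\<in>M. \<delta> \<le> vnorm (x - y)" and "\<delta> \<ge> 0"
    and mm: "\<And>n. mm n \<in> M" "\<And>n. vnorm (x - mm n) \<le> \<delta> + 1 / real (Suc n)"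
    and "e > 0"
  shows "\<exists>N. \<forall>m\<ge>N. \<forall>n\<ge>N. vnorm (mm m - mm n) < e"
proof -
  have bound: "(vnorm (mm j - mm k))^2 \<le> (4 * \<delta> + 2) * (1 / real (Suc j) + 1 / real (Suc k))"
    for j k
    by (rule approximate_minimizers_close[OF M x low \<open>\<delta> \<ge> 0\<close> mm(1) mm(2) mm(1) mm(2)]) simp_all
  have "e^2 / (8 * \<delta> + 4) > 0"
    using \<open>e > 0\<close> \<open>\<delta> \<ge> 0\<close> by auto
  then obtain N where N: "inverse (real (Suc N)) < e^2 / (8 * \<delta> + 4)"
    using reals_Archimedean by blast
  have "vnorm (mm m - mm n) < e" if "N \<le> m" "N \<le> n" for m n
  proof -
    have "1 / real (Suc m) \<le> inverse (real (Suc N))" "1 / real (Suc n) \<le> inverse (real (Suc N))"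
      using that by (auto simp: divide_simps)
    then have "(4 * \<delta> + 2) * (1 / real (Suc m) + 1 / real (Suc n))
        \<le> (4 * \<delta> + 2) * (2 * inverse (real (Suc N)))"
      using \<open>\<delta> \<ge> 0\<close> by (intro mult_left_mono) auto
    also have "\<dots> < (4 * \<delta> + 2) * (2 * (e^2 / (8 * \<delta> + 4)))"
      using N \<open>\<delta> \<ge> 0\<close> by (intro mult_strict_left_mono) auto
    also have "\<dots> = e^2"
      using \<open>\<delta> \<ge> 0\<close> by (simp add: field_simps)
    finally have "(vnorm (mm m - mm n))^2 < e^2"
      using bound[of m n] by linarith
    then show ?thesis
      using \<open>e > 0\<close> by (simp add: power_less_imp_less_base)
  qed
  then show ?thesis by blast
qed

lemma closed_subspace_limit:
  fixes mm :: "nat \<Rightarrow> 'i vec"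
  assumes M: "closed_subspace M" and "\<And>n. mm n \<in> M" and "m \<in> ell2"
    and conv: "\<And>e. e > 0 \<Longrightarrow> \<exists>N. \<forall>n\<ge>N. vnorm (mm n - m) < e"
  shows "m \<in> M"
proof -
  have "m \<in> l2closure M"
    unfolding l2closure_def
  proof (intro CollectI conjI allI impI \<open>m \<in> ell2\<close>)
    fix e :: real assume "e > 0"
    then obtain N where "\<forall>n\<ge>N. vnorm (mm n - m) < e"
      using conv by blast
    then have "vnorm (m - mm N) < e"
      by (simp add: vnorm_minus_commute)
    then show "\<exists>y\<in>M. vnorm (m - y) < e"
      using \<open>\<And>n. mm n \<in> M\<close> by blast
  qed
  then show ?thesis
    using closed_subspace_closure[OF M] by blast
qed

lemma vnorm_le_of_limit:
  assumes "x \<in> ell2" "\<And>n. mm n \<in> ell2" "m \<in> ell2"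
    and bound: "\<And>n. vnorm (x - mm n) \<le> \<delta> + 1 / real (Suc n)"
    and conv: "\<And>e. e > 0 \<Longrightarrow> \<exists>N. \<forall>n\<ge>N. vnorm (mm n - m) < e"
  shows "vnorm (x - m) \<le> \<delta>"
proof (rule field_le_epsilon)
  fix e :: real assume "e > 0"
  obtain N1 where N1: "\<forall>n\<ge>N1. vnorm (mm n - m) < e/2"
    using conv[of "e/2"] \<open>e > 0\<close> by auto
  obtain N2 where N2: "inverse (real (Suc N2)) < e/2"
    using reals_Archimedean[of "e/2"] \<open>e > 0\<close> by auto
  define n where "n = max N1 N2"
  have "vnorm (x - m) \<le> vnorm (x - mm n) + vnorm (mm n - m)"
    by (rule vnorm_triangle_diff[OF assms(1-3)])
  also have "\<dots> < (\<delta> + 1 / real (Suc n)) + e/2"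
    using bound[of n] N1 by (simp add: n_def add_mono_thms_linordered_field)
  also have "1 / real (Suc n) \<le> inverse (real (Suc N2))"
    by (simp add: n_def inverse_eq_divide frac_le)
  finally show "vnorm (x - m) \<le> \<delta> + e"
    using N2 by simp
qed

lemma best_approximation_exists:
  assumes M: "closed_subspace M" and x: "x \<in> ell2"
  shows "\<exists>m\<in>M. \<forall>y\<in>M. vnorm (x - m) \<le> vnorm (x - y)"
proof -
  define D where "D = (\<lambda>y. vnorm (x - y)) ` M"
  define \<delta> where "\<delta> = Inf D"
  have "D \<noteq> {}"
    using closed_subspace_zero[OF M] by (auto simp: D_def)
  have "bdd_below D"
    by (auto simp: D_def intro!: bdd_belowI[of _ 0])
  then have low: "\<forall>y\<in>M. \<delta> \<le> vnorm (x - y)"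
    unfolding \<delta>_def by (auto intro: cInf_lower simp: D_def)
  have "\<delta> \<ge> 0"
    unfolding \<delta>_def using \<open>D \<noteq> {}\<close> by (rule cInf_greatest) (auto simp: D_def)
  have "\<exists>y\<in>M. vnorm (x - y) \<le> \<delta> + 1 / real (Suc n)" for n
  proof -
    have "Inf D < \<delta> + 1 / real (Suc n)"
      by (simp add: \<delta>_def)
    then show ?thesis
      using cInf_lessD[OF \<open>D \<noteq> {}\<close>] by (force simp: D_def)
  qed
  then obtain mm where mm: "\<And>n. mm n \<in> M" "\<And>n. vnorm (x - mm n) \<le> \<delta> + 1 / real (Suc n)"
    by metis
  have mm_ell2: "\<And>n. mm n \<in> ell2"
    using closed_subspace_mem_ell2[OF M mm(1)] .
  obtain m where "m \<in> ell2" and conv: "\<And>e. e > 0 \<Longrightarrow> \<exists>N. \<forall>n\<ge>N. vnorm (mm n - m) < e"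
    using ell2_complete[OF mm_ell2 minimizing_sequence_Cauchy[OF M x low \<open>\<delta> \<ge> 0\<close> mm]] by blast
  have "vnorm (x - m) \<le> \<delta>"
    using vnorm_le_of_limit[OF x mm_ell2 \<open>m \<in> ell2\<close> mm(2) conv] .
  then show ?thesis
    using closed_subspace_limit[OF M mm(1) \<open>m \<in> ell2\<close> conv] low by (auto intro: order_trans)
qed

text \<open>Compare m with the competitor m + t y, for t a small multiple of \<open>\<langle>y, x - m\<rangle>\<close>.\<close>

lemma best_approximation_orthogonal:
  assumes M: "closed_subspace M" and x: "x \<in> ell2" and "m \<in> M"
    and min: "\<forall>y\<in>M. vnorm (x - m) \<le> vnorm (x - y)" and "y \<in> M"
  shows "cinner y (x - m) = 0"
proof -
  define z c where "z = x - m" and "c = cinner y z"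
  define r where "r = 1 / ((vnorm y)^2 + 1)"
  define t where "t = complex_of_real r * c"
  have yL: "y \<in> ell2" and zL: "z \<in> ell2"
    using assms closed_subspace_mem_ell2[OF M] ell2_diff by (auto simp: z_def)
  have "(vnorm y)^2 + 1 > 0"
    by (simp add: add_nonneg_pos)
  then have r: "r > 0" "r * (vnorm y)^2 < 1"
    by (auto simp: r_def divide_simps)
  have "x - (m + csmul t y) = z + csmul (-t) y"
    by (auto simp: z_def csmul_def)
  moreover have "m + csmul t y \<in> M"
    using M \<open>m \<in> M\<close> \<open>y \<in> M\<close> by (simp add: closed_subspace_add closed_subspace_csmul)
  ultimately have "vnorm z \<le> vnorm (z + csmul (-t) y)"
    using min by (metis z_def)
  then have "(vnorm z)^2 \<le> (vnorm (z + csmul (-t) y))^2"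
    by (intro power_mono) auto
  moreover have "Re (cinner z (csmul (-t) y)) = - (r * (cmod c)^2)"
  proof -
    have "cinner z (csmul (-t) y) = - (complex_of_real r * (c * cnj c))"
      by (simp add: cinner_csmul_right t_def c_def cinner_commute[of z y] mult.assoc)
    then show ?thesis
      by (metis Re_complex_of_real complex_norm_square of_real_mult uminus_complex.sel(1))
  qed
  moreover have "(vnorm (csmul (-t) y))^2 = (r * (cmod c)^2) * (r * (vnorm y)^2)"
    using r by (simp add: vnorm_csmul t_def norm_mult power_mult_distrib power2_eq_square)
  ultimately have "2 * (r * (cmod c)^2) \<le> (r * (cmod c)^2) * (r * (vnorm y)^2)"
    using vnorm_add_power2[OF zL ell2_csmul[OF yL], of "-t"] by linarith
  also have "\<dots> \<le> r * (cmod c)^2"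
    using r by (simp add: mult_left_le)
  finally have "(cmod c)^2 \<le> 0"
    using r by (simp add: mult_le_0_iff)
  then show ?thesis
    by (simp add: c_def z_def)
qed

lemma orthogonal_decomposition:
  assumes "closed_subspace M" "x \<in> ell2"
  shows "\<exists>m\<in>M. \<forall>y\<in>M. cinner y (x - m) = 0"
  using best_approximation_exists[OF assms] best_approximation_orthogonal[OF assms] by blast

lemma orthogonal_decomposition_unique:
  assumes M: "closed_subspace M" and x: "x \<in> ell2"
    and m1: "m1 \<in> M" "\<forall>y\<in>M. cinner y (x - m1) = 0"
    and m2: "m2 \<in> M" "\<forall>y\<in>M. cinner y (x - m2) = 0"
  shows "m1 = m2"
proof -
  have L: "m1 \<in> ell2" "m2 \<in> ell2"
    using m1 m2 closed_subspace_mem_ell2[OF M] by auto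
  have "m1 - m2 \<in> M"
    using closed_subspace_diff[OF M m1(1) m2(1)] .
  then have "cinner (m1 - m2) (x - m1) = 0" "cinner (m1 - m2) (x - m2) = 0"
    using m1 m2 by auto
  then have "cinner (m1 - m2) m1 = cinner (m1 - m2) m2"
    using cinner_diff_right[OF x L(1) ell2_diff[OF L]] cinner_diff_right[OF x L(2) ell2_diff[OF L]]
    by simp
  then show ?thesis
    using cinner_diff_eq_imp_eq[OF L] by blast
qed

section \<open>Bounded operators, spans and closures\<close>

lemma bop_maps: "bop S b \<Longrightarrow> x \<in> S \<Longrightarrow> b x \<in> S"
  by (simp add: bop_def)

lemma bop_add: "bop S b \<Longrightarrow> x \<in> S \<Longrightarrow> y \<in> S \<Longrightarrow> b (x + y) = b x + b y"
  by (simp add: bop_def)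

lemma bop_csmul: "bop S b \<Longrightarrow> x \<in> S \<Longrightarrow> b (csmul c x) = csmul c (b x)"
  by (simp add: bop_def)

lemma bop_outside: "bop S b \<Longrightarrow> x \<notin> S \<Longrightarrow> b x = 0"
  by (simp add: bop_def)

lemma bop_zero: "bop S b \<Longrightarrow> closed_subspace S \<Longrightarrow> b 0 = 0"
  using bop_csmul[of S b 0 0] closed_subspace_zero[of S] by (simp add: csmul_def zero_fun_def)

lemma bop_diff:
  assumes "bop S b" "closed_subspace S" "x \<in> S" "y \<in> S"
  shows "b (x - y) = b x - b y"
  using bop_add[of S b x "- y"] bop_csmul[of S b y "-1"] closed_subspace_uminus[of S y] assms
  by (simp add: csmul_minus_one)

lemma bop_bound:
  assumes "bop S b"
  shows "\<exists>C>0. \<forall>x\<in>S. vnorm (b x) \<le> C * vnorm x"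
proof -
  obtain C where C: "\<forall>x\<in>S. vnorm (b x) \<le> C * vnorm x"
    using assms by (auto simp: bop_def)
  have "vnorm (b x) \<le> max C 1 * vnorm x" if "x \<in> S" for x
    using C that mult_right_mono[of C "max C 1" "vnorm x"] by force
  then show ?thesis
    by (intro exI[of _ "max C 1"]) auto
qed

lemma bop_comp:
  assumes f: "bop S f" and g: "bop S g" and S: "closed_subspace S"
  shows "bop S (f \<circ> g)"
proof -
  obtain C1 where C1: "C1 > 0" "\<forall>x\<in>S. vnorm (f x) \<le> C1 * vnorm x"
    using bop_bound[OF f] by blast
  obtain C2 where C2: "\<forall>x\<in>S. vnorm (g x) \<le> C2 * vnorm x"
    using bop_bound[OF g] by blast
  have "vnorm (f (g x)) \<le> (C1 * C2) * vnorm x" if "x \<in> S" for x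
  proof -
    have "vnorm (f (g x)) \<le> C1 * vnorm (g x)"
      using C1 bop_maps[OF g that] by blast
    also have "\<dots> \<le> C1 * (C2 * vnorm x)"
      using C1(1) C2 that by (intro mult_left_mono) auto
    finally show ?thesis by (simp add: mult.assoc)
  qed
  then show ?thesis
    using f g bop_zero[OF f S] unfolding bop_def by auto
qed

definition lin_comb :: "nat \<Rightarrow> (nat \<Rightarrow> complex) \<Rightarrow> (nat \<Rightarrow> 'i vec) \<Rightarrow> 'i vec" where
  "lin_comb n c v = (\<Sum>k<n. csmul (c k) (v k))"

lemma lin_span_lin_comb: "lin_span X = {lin_comb n c v | n c v. \<forall>k<n. v k \<in> X}"
  unfolding lin_span_def lin_comb_def by blast

lemma lin_comb_0 [simp]: "lin_comb 0 c v = 0"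
  by (simp add: lin_comb_def)

lemma lin_comb_Suc: "lin_comb (Suc n) c v = lin_comb n c v + csmul (c n) (v n)"
  by (simp add: lin_comb_def)

lemma lin_comb_cong:
  "(\<And>k. k < n \<Longrightarrow> c k = c' k \<and> v k = v' k) \<Longrightarrow> lin_comb n c v = lin_comb n c' v'"
  unfolding lin_comb_def by (rule sum.cong) auto

lemma csmul_lin_comb: "csmul a (lin_comb n c v) = lin_comb n (\<lambda>k. a * c k) v"
  by (induction n) (auto simp: lin_comb_Suc csmul_def fun_eq_iff algebra_simps)

lemma lin_comb_append:
  "lin_comb (n + m) (\<lambda>k. if k < n then c k else d (k - n)) (\<lambda>k. if k < n then v k else w (k - n))
     = lin_comb n c v + lin_comb m d w"
proof (induction m)
  case 0
  have "lin_comb n (\<lambda>k. if k < n then c k else d (k - n)) (\<lambda>k. if k < n then v k else w (k - n))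
      = lin_comb n c v"
    by (rule lin_comb_cong) simp
  then show ?case by (simp only: lin_comb_0 add_0_right)
next
  case (Suc m)
  have "lin_comb (n + Suc m) (\<lambda>k. if k < n then c k else d (k - n)) (\<lambda>k. if k < n then v k else w (k - n))
      = (lin_comb n c v + lin_comb m d w) + csmul (d m) (w m)"
    by (simp only: add_Suc_right lin_comb_Suc Suc) (simp only: not_add_less1 if_False add_diff_cancel_left')
  then show ?case
    by (simp only: lin_comb_Suc add.assoc)
qed

lemma lin_comb_mem: "closed_subspace S \<Longrightarrow> \<forall>k<n. v k \<in> S \<Longrightarrow> lin_comb n c v \<in> S"
  by (induction n) (auto simp: lin_comb_Suc closed_subspace_zero closed_subspace_add closed_subspace_csmul)

lemma bop_lin_comb:
  assumes b: "bop S b" and S: "closed_subspace S"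
  shows "\<forall>k<n. v k \<in> S \<Longrightarrow> b (lin_comb n c v) = lin_comb n c (\<lambda>k. b (v k))"
proof (induction n)
  case 0
  show ?case using bop_zero[OF b S] by (simp only: lin_comb_0)
next
  case (Suc n)
  have "b (lin_comb (Suc n) c v) = b (lin_comb n c v) + b (csmul (c n) (v n))"
    unfolding lin_comb_Suc using Suc.prems lin_comb_mem[OF S, of n v c]
    by (intro bop_add[OF b] closed_subspace_csmul[OF S]) auto
  also have "\<dots> = lin_comb n c (\<lambda>k. b (v k)) + csmul (c n) (b (v n))"
    using Suc bop_csmul[OF b] by simp
  finally show ?case
    by (simp only: lin_comb_Suc)
qed

lemma cinner_lin_comb_left:
  assumes "y \<in> ell2"
  shows "\<forall>k<n. v k \<in> ell2 \<Longrightarrow> cinner (lin_comb n c v) y = (\<Sum>k<n. cnj (c k) * cinner (v k) y)"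
proof (induction n)
  case (Suc n)
  have "cinner (lin_comb (Suc n) c v) y = cinner (lin_comb n c v) y + cinner (csmul (c n) (v n)) y"
    unfolding lin_comb_Suc using Suc.prems lin_comb_mem[OF closed_subspace_UNIV_ell2, of n v c] assms
    by (intro cinner_add_left ell2_csmul) auto
  then show ?case
    using Suc by (simp add: cinner_csmul_left)
qed simp

lemma lin_span_superset: "X \<subseteq> lin_span X"
proof
  fix x assume "x \<in> X"
  then have "x = lin_comb 1 (\<lambda>_. 1) (\<lambda>_. x) \<and> (\<forall>k<1. (\<lambda>_. x) k \<in> X)"
    by (simp add: lin_comb_def csmul_def)
  then show "x \<in> lin_span X"
    unfolding lin_span_lin_comb by blast
qed

lemma lin_span_mono: "X \<subseteq> Y \<Longrightarrow> lin_span X \<subseteq> lin_span Y"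
  unfolding lin_span_def by blast

lemma lin_span_subset: "closed_subspace S \<Longrightarrow> X \<subseteq> S \<Longrightarrow> lin_span X \<subseteq> S"
  unfolding lin_span_lin_comb using lin_comb_mem by blast

lemma lin_span_zero: "0 \<in> lin_span X"
  unfolding lin_span_lin_comb by (auto intro!: exI[of _ 0])

lemma lin_span_csmul:
  assumes "x \<in> lin_span X"
  shows "csmul a x \<in> lin_span X"
proof -
  obtain n c v where "x = lin_comb n c v" "\<forall>k<n. v k \<in> X"
    using assms unfolding lin_span_lin_comb by blast
  then have "csmul a x = lin_comb n (\<lambda>k. a * c k) v \<and> (\<forall>k<n. v k \<in> X)"
    by (simp add: csmul_lin_comb)
  then show ?thesis
    unfolding lin_span_lin_comb by blast
qed

lemma lin_span_add:
  assumes "x \<in> lin_span X" "y \<in> lin_span X"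
  shows "x + y \<in> lin_span X"
proof -
  obtain n c v where x: "x = lin_comb n c v" "\<forall>k<n. v k \<in> X"
    using assms(1) unfolding lin_span_lin_comb by blast
  obtain m d w where y: "y = lin_comb m d w" "\<forall>k<m. w k \<in> X"
    using assms(2) unfolding lin_span_lin_comb by blast
  have "\<forall>k<n + m. (if k < n then v k else w (k - n)) \<in> X"
    using x y by auto
  then show ?thesis
    unfolding lin_span_lin_comb x y lin_comb_append[symmetric] by blast
qed

lemma bop_image_lin_span:
  assumes "bop S b" "closed_subspace S" "X \<subseteq> S"
  shows "b ` lin_span X \<subseteq> lin_span (b ` X)"
proof
  fix z assume "z \<in> b ` lin_span X"
  then obtain n c v where z: "z = b (lin_comb n c v)" "\<forall>k<n. v k \<in> X"
    unfolding lin_span_lin_comb by blast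
  then have "z = lin_comb n c (\<lambda>k. b (v k))"
    using bop_lin_comb[OF assms(1,2)] assms(3) by blast
  then show "z \<in> lin_span (b ` X)"
    using z(2) unfolding lin_span_lin_comb by blast
qed

lemma orthogonal_lin_span:
  assumes "X \<subseteq> ell2" "y \<in> ell2" "\<forall>x\<in>X. cinner x y = 0" "z \<in> lin_span X"
  shows "cinner z y = 0"
proof -
  obtain n c v where z: "z = lin_comb n c v" "\<forall>k<n. v k \<in> X"
    using assms(4) unfolding lin_span_lin_comb by blast
  then have "\<forall>k<n. v k \<in> ell2"
    using assms(1) by blast
  then show ?thesis
    using cinner_lin_comb_left[OF assms(2)] z assms(3) by simp
qed

lemma l2closure_ell2: "l2closure Z \<subseteq> ell2"
  by (auto simp: l2closure_def)

lemma l2closure_superset: "Z \<subseteq> ell2 \<Longrightarrow> Z \<subseteq> l2closure Z"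
  unfolding l2closure_def by (auto intro!: bexI)

lemma l2closure_mono: "Z \<subseteq> W \<Longrightarrow> l2closure Z \<subseteq> l2closure W"
  unfolding l2closure_def by blast

lemma l2closure_minimal: "closed_subspace S \<Longrightarrow> Z \<subseteq> S \<Longrightarrow> l2closure Z \<subseteq> S"
  using l2closure_mono closed_subspace_closure by blast

lemma l2closure_approx: "x \<in> l2closure Z \<Longrightarrow> e > 0 \<Longrightarrow> \<exists>z\<in>Z. vnorm (x - z) < e"
  unfolding l2closure_def by blast

lemma l2closure_l2closure:
  assumes "Z \<subseteq> ell2"
  shows "l2closure (l2closure Z) \<subseteq> l2closure Z"
proof
  fix x assume x: "x \<in> l2closure (l2closure Z)"
  have "\<exists>z\<in>Z. vnorm (x - z) < e" if "e > 0" for e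
  proof -
    obtain y where y: "y \<in> l2closure Z" "vnorm (x - y) < e/2"
      using l2closure_approx[OF x, of "e/2"] \<open>e > 0\<close> by auto
    obtain z where z: "z \<in> Z" "vnorm (y - z) < e/2"
      using l2closure_approx[OF y(1), of "e/2"] \<open>e > 0\<close> by auto
    have "vnorm (x - z) \<le> vnorm (x - y) + vnorm (y - z)"
      using x y z assms l2closure_ell2 by (intro vnorm_triangle_diff) auto
    then show ?thesis
      using y z by (intro bexI[of _ z]) auto
  qed
  then show "x \<in> l2closure Z"
    using x l2closure_ell2 unfolding l2closure_def by blast
qed

lemma l2closure_add:
  assumes L: "L \<subseteq> ell2" "\<And>x y. x \<in> L \<Longrightarrow> y \<in> L \<Longrightarrow> x + y \<in> L"
    and x: "x \<in> l2closure L" and y: "y \<in> l2closure L"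
  shows "x + y \<in> l2closure L"
proof -
  have "\<exists>w\<in>L. vnorm (x + y - w) < e" if "e > 0" for e
  proof -
    obtain x' where x': "x' \<in> L" "vnorm (x - x') < e/2"
      using l2closure_approx[OF x, of "e/2"] \<open>e > 0\<close> by auto
    obtain y' where y': "y' \<in> L" "vnorm (y - y') < e/2"
      using l2closure_approx[OF y, of "e/2"] \<open>e > 0\<close> by auto
    have "x \<in> ell2" "y \<in> ell2" "x' \<in> ell2" "y' \<in> ell2"
      using x y x' y' L(1) l2closure_ell2 by auto
    then have "vnorm ((x - x') + (y - y')) \<le> vnorm (x - x') + vnorm (y - y')"
      by (intro vnorm_triangle ell2_diff)
    moreover have "vnorm (x + y - (x' + y')) = vnorm ((x - x') + (y - y'))"
      by (simp add: algebra_simps)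
    ultimately have "vnorm (x + y - (x' + y')) \<le> vnorm (x - x') + vnorm (y - y')"
      by linarith
    then show ?thesis
      using x' y' L(2) by (intro bexI[of _ "x' + y'"]) auto
  qed
  then show ?thesis
    using x y l2closure_ell2 ell2_add unfolding l2closure_def by blast
qed

lemma l2closure_csmul:
  assumes L: "\<And>c x. x \<in> L \<Longrightarrow> csmul c x \<in> L" and x: "x \<in> l2closure L"
  shows "csmul c x \<in> l2closure L"
proof -
  have c: "cmod c + 1 > 0"
    by (simp add: add_nonneg_pos)
  have "\<exists>w\<in>L. vnorm (csmul c x - w) < e" if "e > 0" for e
  proof -
    obtain x' where x': "x' \<in> L" "vnorm (x - x') < e / (cmod c + 1)"
      using l2closure_approx[OF x, of "e / (cmod c + 1)"] \<open>e > 0\<close> c by auto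
    have "csmul c x - csmul c x' = csmul c (x - x')"
      by (auto simp: csmul_def algebra_simps)
    then have "vnorm (csmul c x - csmul c x') = cmod c * vnorm (x - x')"
      by (simp add: vnorm_csmul)
    also have "\<dots> \<le> (cmod c + 1) * vnorm (x - x')"
      by (simp add: mult_right_mono)
    also have "\<dots> < (cmod c + 1) * (e / (cmod c + 1))"
      using x' c by (intro mult_strict_left_mono) auto
    finally show ?thesis
      using x' L c by (intro bexI[of _ "csmul c x'"]) auto
  qed
  then show ?thesis
    using x l2closure_ell2 ell2_csmul unfolding l2closure_def by blast
qed

lemma closed_subspace_l2closure:
  assumes L: "L \<subseteq> ell2" "0 \<in> L" "\<And>x y. x \<in> L \<Longrightarrow> y \<in> L \<Longrightarrow> x + y \<in> L"
    "\<And>c x. x \<in> L \<Longrightarrow> csmul c x \<in> L"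
  shows "closed_subspace (l2closure L)"
  unfolding closed_subspace_def
  using l2closure_ell2 l2closure_superset[OF L(1)] L(2) l2closure_add[OF L(1,3)]
    l2closure_csmul[OF L(4)] l2closure_l2closure[OF L(1)]
  by blast

lemma closed_subspace_l2closure_lin_span:
  "X \<subseteq> ell2 \<Longrightarrow> closed_subspace (l2closure (lin_span X))"
  by (intro closed_subspace_l2closure lin_span_subset[OF closed_subspace_UNIV_ell2]
      lin_span_zero lin_span_add lin_span_csmul)

lemma closed_subspace_fixed_points:
  assumes b: "bop S b" and S: "closed_subspace S"
  shows "closed_subspace {x \<in> S. b x = x}"
proof -
  obtain C where C: "C > 0" "\<forall>x\<in>S. vnorm (b x) \<le> C * vnorm x"
    using bop_bound[OF b] by blast
  have "b x = x" if x: "x \<in> l2closure {x \<in> S. b x = x}" and "x \<in> S" for x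
  proof -
    have "vnorm (b x - x) \<le> 0 + e" if "e > 0" for e
    proof -
      obtain z where z: "z \<in> S" "b z = z" "vnorm (x - z) < e / (C + 1)"
        using l2closure_approx[OF x, of "e / (C + 1)"] \<open>e > 0\<close> C(1) by auto
      have xz: "x - z \<in> S"
        using closed_subspace_diff[OF S \<open>x \<in> S\<close> z(1)] .
      have "b x - x = b (x - z) + (z - x)"
        using bop_diff[OF b S \<open>x \<in> S\<close> z(1)] z(2) by simp
      moreover have "b (x - z) \<in> ell2" "z - x \<in> ell2"
        using bop_maps[OF b xz] closed_subspace_diff[OF S z(1) \<open>x \<in> S\<close>]
        by (auto intro: closed_subspace_mem_ell2[OF S])
      ultimately have "vnorm (b x - x) \<le> vnorm (b (x - z)) + vnorm (x - z)"
        using vnorm_triangle vnorm_minus_commute[of z x] by metis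
      also have "\<dots> \<le> (C + 1) * vnorm (x - z)"
        using C(2) xz by (simp add: distrib_right)
      also have "\<dots> \<le> e"
        using z(3) C(1) by (simp add: field_simps)
      finally show ?thesis by simp
    qed
    then have "vnorm (b x - x) \<le> 0"
      by (rule field_le_epsilon)
    moreover have "b x - x \<in> ell2"
      using bop_maps[OF b \<open>x \<in> S\<close>] \<open>x \<in> S\<close> closed_subspace_diff[OF S]
        closed_subspace_mem_ell2[OF S] by blast
    ultimately show ?thesis
      using vnorm_eq_zero[of "b x - x"] vnorm_nonneg[of "b x - x"] by simp
  qed
  then show ?thesis
    using S l2closure_minimal[OF S, of "{x \<in> S. b x = x}"] bop_zero[OF b S]
    unfolding closed_subspace_def
    by (auto simp: bop_add[OF b] bop_csmul[OF b])
qed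

lemma bop_image_l2closure:
  assumes b: "bop S b" and S: "closed_subspace S" and "Z \<subseteq> S"
  shows "b ` l2closure Z \<subseteq> l2closure (b ` Z)"
proof
  fix u assume "u \<in> b ` l2closure Z"
  then obtain x where x: "x \<in> l2closure Z" "u = b x" by blast
  have "x \<in> S"
    using x l2closure_minimal[OF S \<open>Z \<subseteq> S\<close>] by blast
  obtain C where C: "C > 0" "\<forall>x\<in>S. vnorm (b x) \<le> C * vnorm x"
    using bop_bound[OF b] by blast
  have "\<exists>y\<in>b ` Z. vnorm (b x - y) < e" if "e > 0" for e
  proof -
    obtain z where z: "z \<in> Z" "vnorm (x - z) < e / C"
      using l2closure_approx[OF x(1), of "e / C"] \<open>e > 0\<close> C(1) by auto
    have "z \<in> S" using z \<open>Z \<subseteq> S\<close> by blast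
    have "vnorm (b x - b z) = vnorm (b (x - z))"
      using bop_diff[OF b S \<open>x \<in> S\<close> \<open>z \<in> S\<close>] by simp
    also have "\<dots> \<le> C * vnorm (x - z)"
      using C closed_subspace_diff[OF S \<open>x \<in> S\<close> \<open>z \<in> S\<close>] by blast
    also have "\<dots> < C * (e / C)"
      using z C by (intro mult_strict_left_mono) auto
    finally show ?thesis
      using z C(1) by auto
  qed
  moreover have "b x \<in> ell2"
    using bop_maps[OF b \<open>x \<in> S\<close>] closed_subspace_mem_ell2[OF S] by blast
  ultimately show "u \<in> l2closure (b ` Z)"
    unfolding l2closure_def x by blast
qed

lemma orthogonal_l2closure:
  assumes "Z \<subseteq> ell2" "y \<in> ell2" "\<forall>z\<in>Z. cinner z y = 0" "x \<in> l2closure Z"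
  shows "cinner x y = 0"
proof -
  have "x \<in> ell2"
    using assms(4) l2closure_ell2 by blast
  have "cmod (cinner x y) \<le> 0 + e" if "e > 0" for e
  proof -
    have "vnorm y + 1 > 0"
      using vnorm_nonneg[of y] by linarith
    then obtain z where z: "z \<in> Z" "vnorm (x - z) < e / (vnorm y + 1)"
      using l2closure_approx[OF assms(4), of "e / (vnorm y + 1)"] \<open>e > 0\<close> by auto
    have "z \<in> ell2"
      using z assms(1) by blast
    have "cinner x y = cinner (x - z) y"
      using cinner_diff_left[OF \<open>x \<in> ell2\<close> \<open>z \<in> ell2\<close> assms(2)] z assms(3) by simp
    then have "cmod (cinner x y) \<le> vnorm (x - z) * vnorm y"
      using cauchy_schwarz[OF ell2_diff[OF \<open>x \<in> ell2\<close> \<open>z \<in> ell2\<close>] assms(2)] by simp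
    also have "\<dots> \<le> (e / (vnorm y + 1)) * vnorm y"
      using z by (intro mult_right_mono) auto
    also have "\<dots> \<le> e"
      using \<open>e > 0\<close> \<open>vnorm y + 1 > 0\<close> by (simp add: divide_simps)
    finally show ?thesis by simp
  qed
  then have "cmod (cinner x y) \<le> 0"
    by (rule field_le_epsilon)
  then show ?thesis by simp
qed

lemma orthogonal_l2closure_lin_span:
  assumes "X \<subseteq> ell2" "y \<in> ell2" "\<forall>x\<in>X. cinner x y = 0"
  shows "\<forall>m\<in>l2closure (lin_span X). cinner m y = 0"
  using orthogonal_l2closure[OF lin_span_subset[OF closed_subspace_UNIV_ell2 assms(1)] assms(2)]
    orthogonal_lin_span[OF assms] by blast

lemma superset_l2closure_lin_span: "X \<subseteq> ell2 \<Longrightarrow> X \<subseteq> l2closure (lin_span X)"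
  using l2closure_superset[OF lin_span_subset[OF closed_subspace_UNIV_ell2]] lin_span_superset
  by blast

section \<open>Orthogonal projections\<close>

definition orth_proj :: "'i vec set \<Rightarrow> 'i vec set \<Rightarrow> 'i op" where
  "orth_proj K M x = (if x \<in> K then (SOME m. m \<in> M \<and> (\<forall>y\<in>M. cinner y (x - m) = 0)) else 0)"

locale closed_subspace_pair =
  fixes K M :: "'i vec set"
  assumes K: "closed_subspace K" and M: "closed_subspace M" and M_subset: "M \<subseteq> K"
begin

abbreviation "P \<equiv> orth_proj K M"

lemma orth_proj_mem_orthogonal:
  assumes "x \<in> K"
  shows "P x \<in> M \<and> (\<forall>y\<in>M. cinner y (x - P x) = 0)"
proof -
  have "\<exists>m. m \<in> M \<and> (\<forall>y\<in>M. cinner y (x - m) = 0)"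
    using orthogonal_decomposition[OF M closed_subspace_mem_ell2[OF K assms]] by blast
  from someI_ex[OF this] show ?thesis
    using assms unfolding orth_proj_def by simp
qed

lemma orth_proj_mem: "x \<in> K \<Longrightarrow> P x \<in> M"
  using orth_proj_mem_orthogonal by blast

lemma orth_proj_orthogonal: "x \<in> K \<Longrightarrow> y \<in> M \<Longrightarrow> cinner y (x - P x) = 0"
  using orth_proj_mem_orthogonal by blast

lemma orth_proj_outside: "x \<notin> K \<Longrightarrow> P x = 0"
  by (simp add: orth_proj_def)

lemma orth_proj_eqI: "x \<in> K \<Longrightarrow> m \<in> M \<Longrightarrow> \<forall>y\<in>M. cinner y (x - m) = 0 \<Longrightarrow> P x = m"
  using orthogonal_decomposition_unique[OF M closed_subspace_mem_ell2[OF K]] orth_proj_mem_orthogonal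
  by blast

lemma orth_proj_fixes: "x \<in> M \<Longrightarrow> P x = x"
  using orth_proj_eqI[of x x] M_subset by auto

lemma mem_ell2_K: "x \<in> K \<Longrightarrow> x \<in> ell2"
  using closed_subspace_mem_ell2[OF K] .

lemma mem_ell2_M: "x \<in> M \<Longrightarrow> x \<in> ell2"
  using closed_subspace_mem_ell2[OF M] .

lemma orth_proj_residual_ell2: "x \<in> K \<Longrightarrow> x - P x \<in> ell2"
  using mem_ell2_K mem_ell2_M orth_proj_mem ell2_diff by blast

lemma bop_orth_proj: "bop K P"
proof -
  have add: "P (x + y) = P x + P y" if "x \<in> K" "y \<in> K" for x y
  proof (rule orth_proj_eqI)
    show "x + y \<in> K" "P x + P y \<in> M"
      using that closed_subspace_add[OF K] closed_subspace_add[OF M] orth_proj_mem by auto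
    have eq: "x + y - (P x + P y) = (x - P x) + (y - P y)"
      by (simp add: algebra_simps)
    have "cinner z ((x - P x) + (y - P y)) = 0" if "z \<in> M" for z
      using cinner_add_right[OF orth_proj_residual_ell2 orth_proj_residual_ell2 mem_ell2_M[OF that]]
        orth_proj_orthogonal[OF _ that] \<open>x \<in> K\<close> \<open>y \<in> K\<close> by simp
    then show "\<forall>z\<in>M. cinner z (x + y - (P x + P y)) = 0"
      unfolding eq by blast
  qed
  have csmul: "P (csmul c x) = csmul c (P x)" if "x \<in> K" for c x
  proof (rule orth_proj_eqI)
    show "csmul c x \<in> K" "csmul c (P x) \<in> M"
      using that closed_subspace_csmul[OF K] closed_subspace_csmul[OF M] orth_proj_mem by auto
    have "csmul c x - csmul c (P x) = csmul c (x - P x)"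
      by (auto simp: csmul_def algebra_simps)
    then show "\<forall>z\<in>M. cinner z (csmul c x - csmul c (P x)) = 0"
      using that by (simp add: cinner_csmul_right orth_proj_orthogonal)
  qed
  have bound: "vnorm (P x) \<le> 1 * vnorm x" if "x \<in> K" for x
  proof -
    have "(vnorm x)^2 = (vnorm (P x))^2 + 2 * Re (cinner (P x) (x - P x)) + (vnorm (x - P x))^2"
      using vnorm_add_power2[OF mem_ell2_M[OF orth_proj_mem[OF that]] orth_proj_residual_ell2[OF that]]
      by simp
    then have "(vnorm (P x))^2 \<le> (vnorm x)^2"
      using orth_proj_orthogonal[OF that orth_proj_mem[OF that]] by simp
    then have "vnorm (P x) \<le> vnorm x"
      by (rule power2_le_imp_le) simp
    then show ?thesis
      by simp
  qed
  show ?thesis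
    unfolding bop_def using orth_proj_mem M_subset add csmul bound orth_proj_outside by blast
qed

lemma orth_proj_idem: "P \<circ> P = P"
proof
  fix x
  show "(P \<circ> P) x = P x"
    using orth_proj_fixes[OF orth_proj_mem[of x]] orth_proj_outside[of x]
      orth_proj_fixes[OF closed_subspace_zero[OF M]]
    by (cases "x \<in> K") simp_all
qed

lemma orth_proj_self_adjoint: "is_adj K P P"
  unfolding is_adj_def
proof (intro conjI bop_orth_proj ballI)
  fix x y assume "x \<in> K" "y \<in> K"
  have "cinner (P x) y = cinner (P x) (P y) + cinner (P x) (y - P y)"
    using cinner_add_right[of "P y" "y - P y" "P x"] mem_ell2_M orth_proj_mem orth_proj_residual_ell2
      \<open>x \<in> K\<close> \<open>y \<in> K\<close> by simp
  also have "\<dots> = cinner (P x) (P y)"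
    using orth_proj_orthogonal[OF \<open>y \<in> K\<close> orth_proj_mem[OF \<open>x \<in> K\<close>]] by simp
  also have "\<dots> = cinner (P x) (P y) + cnj (cinner (P y) (x - P x))"
    using orth_proj_orthogonal[OF \<open>x \<in> K\<close> orth_proj_mem[OF \<open>y \<in> K\<close>]] by simp
  also have "\<dots> = cinner x (P y)"
    using cinner_add_left[of "P x" "x - P x" "P y"] mem_ell2_M orth_proj_mem orth_proj_residual_ell2
      \<open>x \<in> K\<close> \<open>y \<in> K\<close> by (simp add: cinner_commute[of "x - P x"])
  finally show "cinner (P x) y = cinner x (P y)" .
qed

lemma is_projection_orth_proj: "is_projection K P"
  unfolding is_projection_def using bop_orth_proj orth_proj_idem orth_proj_self_adjoint by blast

lemma orth_proj_commute:
  assumes b: "bop K b" and invariant: "\<forall>x\<in>M. b x \<in> M"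
    and orthogonal: "\<forall>y\<in>K. (\<forall>m\<in>M. cinner m y = 0) \<longrightarrow> (\<forall>m\<in>M. cinner m (b y) = 0)"
  shows "P \<circ> b = b \<circ> P"
proof
  fix x
  show "(P \<circ> b) x = (b \<circ> P) x"
  proof (cases "x \<in> K")
    case True
    have "P x \<in> K" "x - P x \<in> K"
      using True orth_proj_mem M_subset closed_subspace_diff[OF K] by auto
    then have "\<forall>m\<in>M. cinner m (b (x - P x)) = 0"
      using orthogonal orth_proj_orthogonal[OF True] by blast
    then have "\<forall>m\<in>M. cinner m (b x - b (P x)) = 0"
      using bop_diff[OF b K True \<open>P x \<in> K\<close>] by simp
    then show ?thesis
      using orth_proj_eqI[OF bop_maps[OF b True]] invariant orth_proj_mem[OF True] by simp
  next
    case False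
    then show ?thesis
      using bop_outside[OF b] orth_proj_outside bop_zero[OF b K] orth_proj_fixes
        closed_subspace_zero[OF M] by simp
  qed
qed

end

lemma orth_proj_l2closure_lin_span_commute:
  assumes K: "closed_subspace K" and "X \<subseteq> K" and b: "bop K b" and "b ` X \<subseteq> X"
    and orthogonal: "\<forall>y\<in>K. (\<forall>x\<in>X. cinner x y = 0) \<longrightarrow> (\<forall>x\<in>X. cinner x (b y) = 0)"
  shows "orth_proj K (l2closure (lin_span X)) \<circ> b = b \<circ> orth_proj K (l2closure (lin_span X))"
proof -
  have "X \<subseteq> ell2"
    using \<open>X \<subseteq> K\<close> closed_subspace_ell2[OF K] by blast
  interpret closed_subspace_pair K "l2closure (lin_span X)"
    using K closed_subspace_l2closure_lin_span[OF \<open>X \<subseteq> ell2\<close>]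
      l2closure_minimal[OF K lin_span_subset[OF K \<open>X \<subseteq> K\<close>]]
    by unfold_locales
  show ?thesis
  proof (rule orth_proj_commute[OF b])
    have "b ` l2closure (lin_span X) \<subseteq> l2closure (lin_span (b ` X))"
      using bop_image_l2closure[OF b K lin_span_subset[OF K \<open>X \<subseteq> K\<close>]]
        l2closure_mono[OF bop_image_lin_span[OF b K \<open>X \<subseteq> K\<close>]] by blast
    also have "\<dots> \<subseteq> l2closure (lin_span X)"
      using l2closure_mono[OF lin_span_mono[OF \<open>b ` X \<subseteq> X\<close>]] .
    finally show "\<forall>x\<in>l2closure (lin_span X). b x \<in> l2closure (lin_span X)"
      by blast
    show "\<forall>y\<in>K. (\<forall>m\<in>l2closure (lin_span X). cinner m y = 0) \<longrightarrow>
        (\<forall>m\<in>l2closure (lin_span X). cinner m (b y) = 0)"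
    proof (rule ballI, rule impI)
      fix y assume "y \<in> K" and "\<forall>m\<in>l2closure (lin_span X). cinner m y = 0"
      then have "\<forall>x\<in>X. cinner x (b y) = 0"
        using orthogonal superset_l2closure_lin_span[OF \<open>X \<subseteq> ell2\<close>] by blast
      moreover have "b y \<in> ell2"
        using bop_maps[OF b \<open>y \<in> K\<close>] mem_ell2_K by blast
      ultimately show "\<forall>m\<in>l2closure (lin_span X). cinner m (b y) = 0"
        using orthogonal_l2closure_lin_span[OF \<open>X \<subseteq> ell2\<close>] by blast
    qed
  qed
qed

section \<open>Commutants and von Neumann algebras\<close>

lemma op_commutant_antimono: "Y \<subseteq> Z \<Longrightarrow> op_commutant S Z \<subseteq> op_commutant S Y"
  unfolding op_commutant_def by blast

lemma op_commutant_Un: "op_commutant S (Y \<union> Z) = op_commutant S Y \<inter> op_commutant S Z"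
  unfolding op_commutant_def by blast

lemma bop_of_op_commutant: "b \<in> op_commutant S M \<Longrightarrow> bop S b"
  by (simp add: op_commutant_def)

lemma op_commutant_commute: "c \<in> op_commutant S M \<Longrightarrow> a \<in> M \<Longrightarrow> c \<circ> a = a \<circ> c"
  by (simp add: op_commutant_def)

lemma subset_op_commutant_op_commutant:
  "\<forall>y\<in>Y. bop S y \<Longrightarrow> Y \<subseteq> op_commutant S (op_commutant S Y)"
  unfolding op_commutant_def by auto

lemma op_commutant_triple:
  assumes "\<forall>y\<in>Y. bop S y"
  shows "op_commutant S (op_commutant S (op_commutant S Y)) = op_commutant S Y"
proof
  show "op_commutant S (op_commutant S (op_commutant S Y)) \<subseteq> op_commutant S Y"
    using op_commutant_antimono[OF subset_op_commutant_op_commutant[OF assms]] .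
  show "op_commutant S Y \<subseteq> op_commutant S (op_commutant S (op_commutant S Y))"
    by (rule subset_op_commutant_op_commutant) (auto simp: op_commutant_def)
qed

lemma vN_algebra_bop: "vN_algebra S M \<Longrightarrow> a \<in> M \<Longrightarrow> bop S a"
  by (simp add: vN_algebra_def)

lemma vN_algebra_memI:
  assumes "vN_algebra S M" "bop S b" "\<forall>c\<in>op_commutant S M. b \<circ> c = c \<circ> b"
  shows "b \<in> M"
  using assms by (auto simp: vN_algebra_def op_commutant_def)

lemma vN_algebra_comp:
  assumes M: "vN_algebra S M" and S: "closed_subspace S" and "a \<in> M" "b \<in> M"
  shows "a \<circ> b \<in> M"
proof (rule vN_algebra_memI[OF M])
  show "bop S (a \<circ> b)"
    using bop_comp vN_algebra_bop assms by blast
  show "\<forall>c\<in>op_commutant S M. a \<circ> b \<circ> c = c \<circ> (a \<circ> b)"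
  proof
    fix c assume "c \<in> op_commutant S M"
    then have "c \<circ> a = a \<circ> c" "c \<circ> b = b \<circ> c"
      using op_commutant_commute \<open>a \<in> M\<close> \<open>b \<in> M\<close> by auto
    then show "a \<circ> b \<circ> c = c \<circ> (a \<circ> b)"
      by (metis comp_assoc)
  qed
qed

lemma bop_idop: "closed_subspace S \<Longrightarrow> bop S (idop S)"
  unfolding bop_def idop_def
  by (auto simp: closed_subspace_add closed_subspace_csmul intro!: exI[of _ "1::real"])

lemma idop_commute:
  assumes "closed_subspace S" "bop S c"
  shows "idop S \<circ> c = c \<circ> idop S"
proof
  fix x
  show "(idop S \<circ> c) x = (c \<circ> idop S) x"
    using bop_maps[OF assms(2)] bop_outside[OF assms(2)] bop_zero[OF assms(2,1)]
      closed_subspace_zero[OF assms(1)]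
    by (auto simp: idop_def)
qed

lemma vN_algebra_idop: "vN_algebra S M \<Longrightarrow> closed_subspace S \<Longrightarrow> idop S \<in> M"
  using vN_algebra_memI[OF _ bop_idop] idop_commute bop_of_op_commutant by blast

lemma comp_idop_eq_idop_iff:
  assumes "bop S q" "closed_subspace S"
  shows "q \<circ> idop S = idop S \<longleftrightarrow> (\<forall>x\<in>S. q x = x)"
  using bop_zero[OF assms] by (auto simp: fun_eq_iff idop_def)

lemma is_adj_flip:
  assumes "is_adj S a b" "x \<in> S" "y \<in> S"
  shows "cinner (b x) y = cinner x (a y)"
proof -
  have "cinner (a y) x = cinner y (b x)"
    using assms by (simp add: is_adj_def)
  then have "cnj (cinner (a y) x) = cnj (cinner y (b x))"
    by simp
  then show ?thesis
    by (simp add: cinner_commute[of x "a y"] cinner_commute[of "b x" y])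
qed

lemma is_adjD: "is_adj S a b \<Longrightarrow> x \<in> S \<Longrightarrow> y \<in> S \<Longrightarrow> cinner (a x) y = cinner x (b y)"
  by (simp add: is_adj_def)

lemma eq_if_cinner_eq:
  assumes S: "closed_subspace S" and "u \<in> S" "v \<in> S" and "\<forall>w\<in>S. cinner w u = cinner w v"
  shows "u = v"
proof -
  have "u - v \<in> S"
    using closed_subspace_diff[OF S \<open>u \<in> S\<close> \<open>v \<in> S\<close>] .
  then show ?thesis
    using assms cinner_diff_eq_imp_eq closed_subspace_mem_ell2[OF S] by blast
qed

lemma is_adj_commute:
  assumes S: "closed_subspace S" and ab: "is_adj S a b" and q: "is_adj S q q"
    and aq: "a \<circ> q = q \<circ> a"
  shows "b \<circ> q = q \<circ> b"
proof
  fix x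
  have a: "bop S a" and b: "bop S b" and "bop S q"
    using ab q by (auto simp: is_adj_def)
  show "(b \<circ> q) x = (q \<circ> b) x"
  proof (cases "x \<in> S")
    case True
    have qx: "q x \<in> S" and bx: "b x \<in> S"
      using bop_maps \<open>bop S q\<close> b True by auto
    have "b (q x) = q (b x)"
    proof (rule eq_if_cinner_eq[OF S bop_maps[OF b qx] bop_maps[OF \<open>bop S q\<close> bx]], rule ballI)
      fix w assume "w \<in> S"
      have aw: "a w \<in> S" and qw: "q w \<in> S"
        using bop_maps a \<open>bop S q\<close> \<open>w \<in> S\<close> by auto
      have "cinner w (b (q x)) = cinner (q (a w)) x"
        using is_adjD[OF ab \<open>w \<in> S\<close> qx] is_adjD[OF q aw True] by simp
      also have "q (a w) = a (q w)"
        using aq by (metis comp_apply)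
      also have "cinner (a (q w)) x = cinner w (q (b x))"
        using is_adjD[OF ab qw True] is_adjD[OF q \<open>w \<in> S\<close> bx] by simp
      finally show "cinner w (b (q x)) = cinner w (q (b x))" .
    qed
    then show ?thesis by simp
  next
    case False
    then show ?thesis
      using bop_outside[OF b False] bop_outside[OF \<open>bop S q\<close> False] bop_zero[OF b S]
        bop_zero[OF \<open>bop S q\<close> S] by simp
  qed
qed

lemma vN_algebra_Int_op_commutant_projection:
  assumes B: "vN_algebra S B" and S: "closed_subspace S" and q: "is_adj S q q"
  shows "vN_algebra S (B \<inter> op_commutant S {q})"
proof -
  have "bop S q"
    using q by (simp add: is_adj_def)
  have eq: "B \<inter> op_commutant S {q} = op_commutant S (op_commutant S B \<union> {q})"
    using B unfolding op_commutant_Un vN_algebra_def by auto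
  show ?thesis
    unfolding vN_algebra_def
  proof (intro conjI ballI)
    fix a assume a: "a \<in> B \<inter> op_commutant S {q}"
    then show "bop S a"
      using vN_algebra_bop[OF B] by blast
    obtain b where b: "b \<in> B" "is_adj S a b"
      using a B by (auto simp: vN_algebra_def)
    then have "b \<circ> q = q \<circ> b"
      using is_adj_commute[OF S b(2) q] a by (auto simp: op_commutant_def)
    then show "\<exists>b\<in>B \<inter> op_commutant S {q}. is_adj S a b"
      using b vN_algebra_bop[OF B] by (auto simp: op_commutant_def)
  next
    show "op_commutant S (op_commutant S (B \<inter> op_commutant S {q})) = B \<inter> op_commutant S {q}"
      unfolding eq using \<open>bop S q\<close> by (intro op_commutant_triple) (auto simp: op_commutant_def)
  qed
qed

lemma idop_in_center:
  assumes "vN_algebra S B" "closed_subspace S"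
  shows "idop S \<in> B \<inter> op_commutant S B"
  using vN_algebra_idop[OF assms] bop_idop[OF assms(2)] idop_commute[OF assms(2)]
    vN_algebra_bop[OF assms(1)] by (auto simp: op_commutant_def)

lemma is_projection_idop: "closed_subspace S \<Longrightarrow> is_projection S (idop S)"
  unfolding is_projection_def is_adj_def using bop_idop by (auto simp: idop_def fun_eq_iff)

lemma idop_comp: "bop S b \<Longrightarrow> closed_subspace S \<Longrightarrow> idop S \<circ> b = b"
  using bop_maps bop_outside closed_subspace_zero by (fastforce simp: idop_def fun_eq_iff)

section \<open>Minimal dilations\<close>

locale dilation_setting =
  fixes H K :: "'i vec set" and A B :: "'i op set"
    and T \<theta> :: "'s::comm_monoid_add \<Rightarrow> 'i op \<Rightarrow> 'i op" and p :: "'i op"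
  assumes H: "closed_subspace H" and vN_A: "vN_algebra H A"
    and dilation: "dilation H A T p K B \<theta>"
begin

lemma K: "closed_subspace K"
  and H_subset_K: "H \<subseteq> K"
  and vN_B: "vN_algebra K B"
  and p_in_B: "p \<in> B"
  and projection_p: "is_projection K p"
  and p_image: "p ` K = H"
  and A_eq: "A = compr H p ` B"
  and e_semigroup: "e_semigroup K B \<theta>"
  using dilation by (simp_all add: dilation_def)

lemma bop_p: "bop K p"
  using projection_p by (simp add: is_projection_def)

lemma adj_p: "is_adj K p p"
  using projection_p by (simp add: is_projection_def)

lemma p_p: "p (p x) = p x"
  using projection_p by (metis comp_apply is_projection_def)

lemma p_fixes_H: "h \<in> H \<Longrightarrow> p h = h"
  using p_image p_p by auto

lemma p_maps_to_H: "x \<in> K \<Longrightarrow> p x \<in> H"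
  using p_image by blast

lemma bop_B: "a \<in> B \<Longrightarrow> bop K a"
  using vN_algebra_bop[OF vN_B] .

lemma theta_in_B: "a \<in> B \<Longrightarrow> \<theta> s a \<in> B"
  using e_semigroup by (simp add: e_semigroup_def cp_semigroup_def ncp_map_def)

lemma theta_zero: "a \<in> B \<Longrightarrow> \<theta> 0 a = a"
  using e_semigroup by (simp add: e_semigroup_def cp_semigroup_def)

lemma theta_adj: "a \<in> B \<Longrightarrow> is_adj K a b \<Longrightarrow> is_adj K (\<theta> s a) (\<theta> s b)"
  using e_semigroup by (simp add: e_semigroup_def)

lemma ext_op_in_B:
  assumes "a \<in> A"
  shows "ext_op p a \<in> B"
proof -
  obtain b where b: "b \<in> B" "a = compr H p b"
    using assms A_eq by blast
  have "ext_op p a = p \<circ> (b \<circ> p)"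
  proof
    fix x
    show "ext_op p a x = (p \<circ> (b \<circ> p)) x"
      using p_maps_to_H[of x] bop_outside[OF bop_p, of x] bop_zero[OF bop_p K]
        bop_zero[OF bop_B[OF b(1)] K] closed_subspace_zero[OF H]
      by (cases "x \<in> K") (simp_all add: b ext_op_def compr_def restr_op_def p_p)
  qed
  then show ?thesis
    using vN_algebra_comp[OF vN_B K p_in_B vN_algebra_comp[OF vN_B K b(1) p_in_B]] by simp
qed

abbreviation word :: "('s \<times> 'i op) list \<Rightarrow> 'i op" where
  "word xs \<equiv> prodops (map (\<lambda>(s, a). \<theta> s (ext_op p a)) xs)"

abbreviation cyclic_vectors :: "'i vec set" where
  "cyclic_vectors \<equiv> {word xs h | xs h. xs \<noteq> [] \<and> set xs \<subseteq> UNIV \<times> A \<and> h \<in> H}"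

abbreviation cyclic_subspace :: "'i vec set" where
  "cyclic_subspace \<equiv> l2closure (lin_span cyclic_vectors)"

abbreviation generators :: "'i op set" where
  "generators \<equiv> \<Union>s. \<theta> s ` ext_op p ` A"

lemma prodops_Cons: "prodops (f # fs) = f \<circ> prodops fs"
  by (simp add: prodops_def)

lemma word_Cons: "word ((s, a) # xs) = \<theta> s (ext_op p a) \<circ> word xs"
  by (simp add: prodops_Cons)

lemma word_comp_p_in_B: "set xs \<subseteq> UNIV \<times> A \<Longrightarrow> word xs \<circ> p \<in> B"
proof (induction xs)
  case Nil
  then show ?case using p_in_B by (simp add: prodops_def)
next
  case (Cons x xs)
  obtain s a where x: "x = (s, a)" "a \<in> A" "set xs \<subseteq> UNIV \<times> A"
    using Cons.prems by auto
  have "word (x # xs) \<circ> p = \<theta> s (ext_op p a) \<circ> (word xs \<circ> p)"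
    by (simp only: x(1) word_Cons comp_assoc)
  then show ?case
    using vN_algebra_comp[OF vN_B K theta_in_B[OF ext_op_in_B[OF x(2)]] Cons.IH[OF x(3)]]
    by (simp only:)
qed

lemma cyclic_vectors_subset_K: "cyclic_vectors \<subseteq> K"
proof
  fix x assume "x \<in> cyclic_vectors"
  then obtain xs h where x: "x = word xs h" "set xs \<subseteq> UNIV \<times> A" "h \<in> H"
    by blast
  then have "(word xs \<circ> p) h \<in> K"
    using bop_maps[OF bop_B[OF word_comp_p_in_B]] H_subset_K by blast
  then show "x \<in> K"
    using x p_fixes_H by simp
qed

lemma cyclic_vectors_ell2: "cyclic_vectors \<subseteq> ell2"
  using cyclic_vectors_subset_K closed_subspace_ell2[OF K] by blast

lemma H_subset_cyclic_vectors: "H \<subseteq> cyclic_vectors"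
proof
  fix h assume "h \<in> H"
  have "idop H \<in> A"
    using vN_algebra_idop[OF vN_A H] .
  then have "word [(0, idop H)] h = h"
    using theta_zero[OF ext_op_in_B] \<open>h \<in> H\<close> p_fixes_H
    by (simp add: prodops_def ext_op_def idop_def)
  then show "h \<in> cyclic_vectors"
    using \<open>idop H \<in> A\<close> \<open>h \<in> H\<close> by (intro CollectI exI[of _ "[(0, idop H)]"] exI[of _ h]) auto
qed

lemma generator_maps_cyclic_vectors:
  assumes "a \<in> A" "x \<in> cyclic_vectors"
  shows "\<theta> s (ext_op p a) x \<in> cyclic_vectors"
proof -
  obtain xs h where x: "x = word xs h" "xs \<noteq> []" "set xs \<subseteq> UNIV \<times> A" "h \<in> H"
    using assms(2) by blast
  then have "\<theta> s (ext_op p a) x = word ((s, a) # xs) h"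
    by (simp add: prodops_Cons)
  then show ?thesis
    using x assms(1) by fastforce
qed

lemma generator_adjoint:
  assumes "a \<in> A"
  shows "\<exists>a'\<in>A. is_adj K (\<theta> s (ext_op p a)) (\<theta> s (ext_op p a'))"
proof -
  obtain a' where a': "a' \<in> A" "is_adj H a a'"
    using vN_A assms by (auto simp: vN_algebra_def)
  have "bop H a" "bop H a'"
    using a' by (auto simp: is_adj_def)
  have "is_adj K (ext_op p a) (ext_op p a')"
    unfolding is_adj_def
  proof (intro conjI ballI)
    show "bop K (ext_op p a)" "bop K (ext_op p a')"
      using bop_B ext_op_in_B assms a' by auto
    fix x y assume "x \<in> K" "y \<in> K"
    then have px: "p x \<in> H" "p y \<in> H"
      using p_maps_to_H by auto
    then have u: "a (p x) \<in> H" "a' (p y) \<in> H"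
      using bop_maps \<open>bop H a\<close> \<open>bop H a'\<close> by auto
    have "cinner (ext_op p a x) y = cinner (p (a (p x))) y"
      using p_fixes_H[OF u(1)] by (simp add: ext_op_def)
    also have "\<dots> = cinner (a (p x)) (p y)"
      using is_adjD[OF adj_p _ \<open>y \<in> K\<close>] u(1) H_subset_K by blast
    also have "\<dots> = cinner (p x) (a' (p y))"
      using is_adjD[OF a'(2) px] .
    also have "\<dots> = cinner x (p (a' (p y)))"
      using is_adjD[OF adj_p \<open>x \<in> K\<close>] u(2) H_subset_K by blast
    also have "\<dots> = cinner x (ext_op p a' y)"
      using p_fixes_H[OF u(2)] by (simp add: ext_op_def)
    finally show "cinner (ext_op p a x) y = cinner x (ext_op p a' y)" .
  qed
  then show ?thesis
    using theta_adj ext_op_in_B assms a' by blast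
qed

lemma generator_preserves_orthogonal:
  assumes "a \<in> A" "y \<in> K" "\<forall>x\<in>cyclic_vectors. cinner x y = 0"
  shows "\<forall>x\<in>cyclic_vectors. cinner x (\<theta> s (ext_op p a) y) = 0"
proof
  fix x assume "x \<in> cyclic_vectors"
  obtain a' where a': "a' \<in> A" "is_adj K (\<theta> s (ext_op p a)) (\<theta> s (ext_op p a'))"
    using generator_adjoint[OF assms(1)] by blast
  have "x \<in> K"
    using \<open>x \<in> cyclic_vectors\<close> cyclic_vectors_subset_K by blast
  have "cinner x (\<theta> s (ext_op p a) y) = cinner (\<theta> s (ext_op p a') x) y"
    using is_adj_flip[OF a'(2) \<open>x \<in> K\<close> assms(2)] by simp
  then show "cinner x (\<theta> s (ext_op p a) y) = 0"
    using assms(3) generator_maps_cyclic_vectors[OF a'(1) \<open>x \<in> cyclic_vectors\<close>] by simp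
qed

lemma op_commutant_word:
  assumes "c \<in> op_commutant K B"
  shows "set xs \<subseteq> UNIV \<times> A \<Longrightarrow> c (word xs h) = word xs (c h)"
proof (induction xs)
  case Nil
  then show ?case by (simp add: prodops_def)
next
  case (Cons x xs)
  obtain s a where "x = (s, a)" "a \<in> A"
    using Cons.prems by auto
  then have "c \<circ> \<theta> s (ext_op p a) = \<theta> s (ext_op p a) \<circ> c"
    using op_commutant_commute[OF assms theta_in_B[OF ext_op_in_B]] by blast
  then have "c (\<theta> s (ext_op p a) z) = \<theta> s (ext_op p a) (c z)" for z
    by (metis comp_apply)
  then show ?case
    using Cons \<open>x = (s, a)\<close> by (simp add: prodops_Cons)
qed

lemma op_commutant_maps_H:
  assumes c: "c \<in> op_commutant K B" and "h \<in> H"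
  shows "c h \<in> H"
proof -
  have "c \<circ> p = p \<circ> c"
    using op_commutant_commute[OF c p_in_B] .
  then have "c h = p (c h)"
    using p_fixes_H[OF \<open>h \<in> H\<close>] by (metis comp_apply)
  moreover have "c h \<in> K"
    using bop_maps[OF bop_of_op_commutant[OF c]] \<open>h \<in> H\<close> H_subset_K by blast
  ultimately show ?thesis
    using p_maps_to_H by metis
qed

lemma op_commutant_maps_cyclic_vectors:
  assumes "c \<in> op_commutant K B"
  shows "c ` cyclic_vectors \<subseteq> cyclic_vectors"
  using op_commutant_word[OF assms] op_commutant_maps_H[OF assms] by fastforce

text \<open>The adjoint d' in B of word xs \<circ> p kills every vector orthogonal to the cyclic vectors,
and c commutes with d'.\<close>

lemma op_commutant_preserves_orthogonal:
  assumes c: "c \<in> op_commutant K B" and "y \<in> K" and orth: "\<forall>x\<in>cyclic_vectors. cinner x y = 0"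
  shows "\<forall>x\<in>cyclic_vectors. cinner x (c y) = 0"
proof
  fix x assume "x \<in> cyclic_vectors"
  then obtain xs h where x: "x = word xs h" "xs \<noteq> []" "set xs \<subseteq> UNIV \<times> A" "h \<in> H"
    by blast
  obtain d' where d': "d' \<in> B" "is_adj K (word xs \<circ> p) d'"
    using vN_B word_comp_p_in_B[OF x(3)] by (auto simp: vN_algebra_def)
  have "c y \<in> K"
    using bop_maps[OF bop_of_op_commutant[OF c] \<open>y \<in> K\<close>] .
  have "d' y = 0"
  proof (rule eq_if_cinner_eq[OF K bop_maps[OF bop_B[OF d'(1)] \<open>y \<in> K\<close>] closed_subspace_zero[OF K]],
      rule ballI)
    fix w assume "w \<in> K"
    have "cinner w (d' y) = cinner (word xs (p w)) y"
      using is_adjD[OF d'(2) \<open>w \<in> K\<close> \<open>y \<in> K\<close>] by simp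
    also have "\<dots> = 0"
      using orth x p_maps_to_H[OF \<open>w \<in> K\<close>] by blast
    finally show "cinner w (d' y) = cinner w 0" by simp
  qed
  have "cinner x (c y) = cinner ((word xs \<circ> p) h) (c y)"
    using x p_fixes_H by simp
  also have "\<dots> = cinner h (d' (c y))"
    using is_adjD[OF d'(2) _ \<open>c y \<in> K\<close>] x(4) H_subset_K by blast
  also have "d' (c y) = c (d' y)"
    using op_commutant_commute[OF c d'(1)] by (metis comp_apply)
  also have "c (d' y) = 0"
    using \<open>d' y = 0\<close> bop_zero[OF bop_of_op_commutant[OF c] K] by simp
  finally show "cinner x (c y) = 0"
    by (simp only: cinner_zero_right)
qed

end

context dilation_setting
begin

abbreviation cyclic_proj :: "'i op" where
  "cyclic_proj \<equiv> orth_proj K cyclic_subspace"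

lemma cyclic_subspace_subset_K: "cyclic_subspace \<subseteq> K"
  using l2closure_minimal[OF K lin_span_subset[OF K cyclic_vectors_subset_K]] .

sublocale cyclic: closed_subspace_pair K cyclic_subspace
  using K closed_subspace_l2closure_lin_span[OF cyclic_vectors_ell2] cyclic_subspace_subset_K
  by unfold_locales

lemma cyclic_proj_commute:
  assumes "bop K b" "b ` cyclic_vectors \<subseteq> cyclic_vectors"
    "\<forall>y\<in>K. (\<forall>x\<in>cyclic_vectors. cinner x y = 0) \<longrightarrow> (\<forall>x\<in>cyclic_vectors. cinner x (b y) = 0)"
  shows "cyclic_proj \<circ> b = b \<circ> cyclic_proj"
  using orth_proj_l2closure_lin_span_commute[OF K cyclic_vectors_subset_K assms] .

lemma cyclic_proj_in_B: "cyclic_proj \<in> B"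
proof (rule vN_algebra_memI[OF vN_B cyclic.bop_orth_proj], rule ballI)
  fix c assume c: "c \<in> op_commutant K B"
  show "cyclic_proj \<circ> c = c \<circ> cyclic_proj"
    using cyclic_proj_commute[OF bop_of_op_commutant[OF c] op_commutant_maps_cyclic_vectors[OF c]]
      op_commutant_preserves_orthogonal[OF c] by blast
qed

lemma cyclic_proj_commute_generator:
  assumes "g \<in> generators"
  shows "cyclic_proj \<circ> g = g \<circ> cyclic_proj"
proof -
  obtain s a where g: "g = \<theta> s (ext_op p a)" "a \<in> A"
    using assms by blast
  have "\<theta> s (ext_op p a) ` cyclic_vectors \<subseteq> cyclic_vectors"
    using generator_maps_cyclic_vectors[OF g(2)] by blast
  moreover have "\<forall>y\<in>K. (\<forall>x\<in>cyclic_vectors. cinner x y = 0) \<longrightarrow>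
      (\<forall>x\<in>cyclic_vectors. cinner x (\<theta> s (ext_op p a) y) = 0)"
    using generator_preserves_orthogonal[OF g(2)] by blast
  ultimately show ?thesis
    unfolding g(1) by (rule cyclic_proj_commute[OF bop_B[OF theta_in_B[OF ext_op_in_B[OF g(2)]]]])
qed

lemma cyclic_proj_in_op_commutant:
  assumes "B = gen_vN K generators"
  shows "cyclic_proj \<in> op_commutant K B"
proof -
  let ?M = "B \<inter> op_commutant K {cyclic_proj}"
  have "vN_algebra K ?M"
    using vN_algebra_Int_op_commutant_projection[OF vN_B K cyclic.orth_proj_self_adjoint] .
  moreover have "generators \<subseteq> ?M"
  proof
    fix g assume "g \<in> generators"
    then have "g \<in> B"
      using theta_in_B ext_op_in_B by blast
    moreover have "g \<circ> cyclic_proj = cyclic_proj \<circ> g"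
      using cyclic_proj_commute_generator[OF \<open>g \<in> generators\<close>] by simp
    ultimately show "g \<in> ?M"
      using bop_B by (simp add: op_commutant_def)
  qed
  ultimately have "gen_vN K generators \<subseteq> ?M"
    unfolding gen_vN_def by (intro Inter_lower) simp
  then have "B \<subseteq> ?M"
    by (simp only: assms[symmetric])
  then show ?thesis
    using cyclic.bop_orth_proj by (auto simp: op_commutant_def)
qed

lemma cyclic_proj_comp_p: "cyclic_proj \<circ> p = p"
proof
  fix x
  show "(cyclic_proj \<circ> p) x = p x"
  proof (cases "x \<in> K")
    case True
    then have "p x \<in> cyclic_subspace"
      using p_maps_to_H H_subset_cyclic_vectors superset_l2closure_lin_span[OF cyclic_vectors_ell2]
      by blast
    then show ?thesis
      using cyclic.orth_proj_fixes by simp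
  next
    case False
    then show ?thesis
      using bop_outside[OF bop_p] cyclic.orth_proj_fixes closed_subspace_zero[OF cyclic.M] by simp
  qed
qed

lemma K_eq_cyclic_subspace_if_minimal:
  assumes "minimal_dilation H A p K B \<theta>"
  shows "K = cyclic_subspace"
proof -
  have "cyclic_proj \<in> B \<inter> op_commutant K B"
    using assms cyclic_proj_in_B cyclic_proj_in_op_commutant by (simp add: minimal_dilation_def)
  then have "cyclic_proj \<circ> idop K = idop K"
    using assms cyclic.is_projection_orth_proj cyclic_proj_comp_p
    by (simp add: minimal_dilation_def central_carrier_def)
  then have "\<forall>x\<in>K. cyclic_proj x = x"
    using comp_idop_eq_idop_iff[OF cyclic.bop_orth_proj K] by blast
  then have "K \<subseteq> cyclic_subspace"
    using cyclic.orth_proj_mem by force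
  then show ?thesis
    using cyclic_subspace_subset_K by blast
qed

lemma central_carrier_idop_if_K_eq_cyclic_subspace:
  assumes "K = cyclic_subspace"
  shows "central_carrier K B p (idop K)"
  unfolding central_carrier_def
proof (intro conjI allI impI idop_in_center[OF vN_B K] is_projection_idop[OF K] idop_comp[OF bop_p K])
  fix q assume q: "q \<in> B \<inter> op_commutant K B \<and> is_projection K q \<and> q \<circ> p = p"
  then have "bop K q" and "q \<in> op_commutant K B"
    by (auto simp: is_projection_def)
  have "q h = h" if "h \<in> H" for h
    using q p_fixes_H[OF that] by (metis comp_apply)
  then have "\<forall>x\<in>cyclic_vectors. q x = x"
    using op_commutant_word[OF \<open>q \<in> op_commutant K B\<close>] by auto
  then have "cyclic_vectors \<subseteq> {x \<in> K. q x = x}"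
    using cyclic_vectors_subset_K by blast
  then have "cyclic_subspace \<subseteq> {x \<in> K. q x = x}"
    using closed_subspace_fixed_points[OF \<open>bop K q\<close> K]
    by (intro l2closure_minimal lin_span_subset)
  then show "q \<circ> idop K = idop K"
    using assms comp_idop_eq_idop_iff[OF \<open>bop K q\<close> K] by blast
qed

end

theorem lemma2p3:
  fixes H K :: "'i vec set"
    and A B :: "'i op set"
    and T \<theta> :: "'s::comm_monoid_add \<Rightarrow> 'i op \<Rightarrow> 'i op"
    and p :: "'i op"
  assumes "closed_subspace H"
    and "vN_algebra H A"
    and "cp_semigroup H A T"
    and "dilation H A T p K B \<theta>"
  shows "minimal_dilation H A p K B \<theta> \<longleftrightarrow>
    (B = gen_vN K (\<Union>s. \<theta> s ` ext_op p ` A) \<and>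
     K = l2closure (lin_span {prodops (map (\<lambda>(s, a). \<theta> s (ext_op p a)) xs) h | xs h.
                             xs \<noteq> [] \<and> set xs \<subseteq> UNIV \<times> A \<and> h \<in> H}))"
proof -
  interpret dilation_setting H K A B T \<theta> p
    using assms by unfold_locales
  show ?thesis
    using K_eq_cyclic_subspace_if_minimal central_carrier_idop_if_K_eq_cyclic_subspace
    unfolding minimal_dilation_def by blast
qed

end
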